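(* Let $n\ge1$, let $q_1,q_2$ be powers of a prime $p$, $q=q_1\otimes q_2$, and $R=A(n,q_1,q_2)$. Let $S$ be the subring of block-diagonal elements $\begin{pmatrix} A & 0\\ 0 & b\end{pmatrix}$ ($A\in M_n(\mathbb{F}_{q_1})$, $b\in\mathbb{F}_{q_2}$) and $J$ the set of elements $\begin{pmatrix} 0 & v\\ 0 & 0\end{pmatrix}$ ($v\in M_{n\times1}(\mathbb{F}_q)$). For $x\in J$ let $C_S(x)=\{s\in S: sx=xs\}$. Let $\mathcal{M}$ be a set of maximal subrings of $S$ of smallest possible cardinality such that $$\bigcup_{x\in J\setminus\{0\}} C_S(x)\subseteq\bigcup_{M\in\mathcal{M}} M,$$ and let $\mathscr{Z}=\{M\oplus J: M\in\mathcal{M}\}$. Then: (1) $\mathscr{S}(R)\cup\mathscr{Z}$ is a cover of $R$; (2) if $R$ is $\sigma$-elementary, then $\mathscr{S}(R)\cup\mathscr{Z}$ is a minimal cover of $R$; (3) $|\mathscr{Z}|\le (|J|-1)/(q-1)=(q^n-1)/(q-1)$; (4) if $R$ is $\sigma$-elementary, then $q^n+1\le\sigma(R)\le (q^{n+1}-1)/(q-1)$.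
   Context: Rings are associative and need not have an identity; a subring is an additive subgroup closed under multiplication. A cover of a ring $R$ is a collection of proper subrings of $R$ whose union is $R$; $\sigma(R)$ is the minimum cardinality of a cover ($\infty$ if none exists), and a minimal cover is one of cardinality $\sigma(R)$. $R$ is $\sigma$-elementary if $\sigma(R)<\sigma(R/I)$ for every nonzero two-sided ideal $I$. For powers $q_1=p^{d_1}$, $q_2=p^{d_2}$ of a prime $p$, $q_1\otimes q_2:=p^{\operatorname{lcm}(d_1,d_2)}$; $\mathbb{F}_{q_1},\mathbb{F}_{q_2}$ are subfields of $\mathbb{F}_q$. $A(n,q_1,q_2)$ is the subring of $M_{n+1}(\mathbb{F}_q)$ of all block matrices $\begin{pmatrix} A & v\\ 0 & b\end{pmatrix}$ with $A\in M_n(\mathbb{F}_{q_1})$, $v\in M_{n\times 1}(\mathbb{F}_q)$, $b\in\mathbb{F}_{q_2}$. $J$ is the Jacobson radical of $R$, and $\mathscr{S}(R)$ is the set of all semisimple complements to $J$ in $R$, i.e. $\mathbb{F}_p$-subalgebras $T$ of $R$ with $R=T\oplus J$; these are exactly the conjugates $(1+x)^{-1}S(1+x)$, $x\in J$. For a subring $M$ of $S$, $M\oplus J=\{m+x: m\in M, x\in J\}$. *)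

theory Defs
  imports "HOL-Algebra.QuotRing" "HOL-Library.Extended_Nat" "HOL-Computational_Algebra.Primes"
begin

text \<open>A subring in the sense of the paper: an additive subgroup closed under
multiplication (no identity required).\<close>
definition nsubring :: "('c, 'm) ring_scheme \<Rightarrow> 'c set \<Rightarrow> bool" where
  "nsubring R H \<longleftrightarrow> H \<subseteq> carrier R \<and> \<zero>\<^bsub>R\<^esub> \<in> H \<and>
     (\<forall>a\<in>H. \<ominus>\<^bsub>R\<^esub> a \<in> H) \<and>
     (\<forall>a\<in>H. \<forall>b\<in>H. a \<oplus>\<^bsub>R\<^esub> b \<in> H \<and> a \<otimes>\<^bsub>R\<^esub> b \<in> H)"

definition is_cover :: "('c, 'm) ring_scheme \<Rightarrow> 'c set set \<Rightarrow> bool" where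
  "is_cover R C \<longleftrightarrow> (\<forall>H\<in>C. nsubring R H \<and> H \<noteq> carrier R) \<and> \<Union>C = carrier R"

definition ecard :: "'x set \<Rightarrow> enat" where
  "ecard A = (if finite A then enat (card A) else \<infinity>)"

text \<open>Covering number; infinity if no cover exists.\<close>
definition sigma :: "('c, 'm) ring_scheme \<Rightarrow> enat" where
  "sigma R = (INF C \<in> {C. is_cover R C}. ecard C)"

definition minimal_cover :: "('c, 'm) ring_scheme \<Rightarrow> 'c set set \<Rightarrow> bool" where
  "minimal_cover R C \<longleftrightarrow> is_cover R C \<and> ecard C = sigma R"

definition sigma_elementary :: "('c, 'm) ring_scheme \<Rightarrow> bool" where
  "sigma_elementary R \<longleftrightarrow>
     (\<forall>I. ideal I R \<and> I \<noteq> {\<zero>\<^bsub>R\<^esub>} \<longrightarrow> sigma R < sigma (R Quot I))"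

definition ssum :: "('c, 'm) ring_scheme \<Rightarrow> 'c set \<Rightarrow> 'c set \<Rightarrow> 'c set" where
  "ssum R A B = {a \<oplus>\<^bsub>R\<^esub> b | a b. a \<in> A \<and> b \<in> B}"

definition is_subfield :: "'a::field set \<Rightarrow> bool" where
  "is_subfield K \<longleftrightarrow> 0 \<in> K \<and> 1 \<in> K \<and>
     (\<forall>x\<in>K. \<forall>y\<in>K. x + y \<in> K \<and> x * y \<in> K) \<and>
     (\<forall>x\<in>K. - x \<in> K \<and> inverse x \<in> K)"

text \<open>Matrices of size N x N over 'a are functions nat => nat => 'a vanishing outside
{0..<N} x {0..<N}. For A(n,q1,q2) we use N = n+1; indices 0..n-1 form the
n x n block, index n is the last row/column.\<close>

definition mat_mul :: "nat \<Rightarrow> (nat \<Rightarrow> nat \<Rightarrow> 'a::field) \<Rightarrow> (nat \<Rightarrow> nat \<Rightarrow> 'a) \<Rightarrow> nat \<Rightarrow> nat \<Rightarrow> 'a" where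
  "mat_mul N A B = (\<lambda>i j. \<Sum>k<N. A i k * B k j)"

definition mat_one :: "nat \<Rightarrow> nat \<Rightarrow> nat \<Rightarrow> 'a::field" where
  "mat_one N = (\<lambda>i j. if i = j \<and> i < N then 1 else 0)"

definition Amat :: "nat \<Rightarrow> 'a::field set \<Rightarrow> 'a set \<Rightarrow> (nat \<Rightarrow> nat \<Rightarrow> 'a) set" where
  "Amat n K1 K2 = {M. (\<forall>i j. n < i \<or> n < j \<longrightarrow> M i j = 0) \<and>
      (\<forall>i<n. \<forall>j<n. M i j \<in> K1) \<and> (\<forall>j<n. M n j = 0) \<and> M n n \<in> K2}"

definition Aring :: "nat \<Rightarrow> 'a::field set \<Rightarrow> 'a set \<Rightarrow> (nat \<Rightarrow> nat \<Rightarrow> 'a) ring" where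
  "Aring n K1 K2 =
     \<lparr>carrier = Amat n K1 K2,
      monoid.mult = mat_mul (Suc n),
      one = mat_one (Suc n),
      zero = (\<lambda>i j. 0),
      add = (\<lambda>A B i j. A i j + B i j)\<rparr>"

definition Sdiag :: "nat \<Rightarrow> 'a::field set \<Rightarrow> 'a set \<Rightarrow> (nat \<Rightarrow> nat \<Rightarrow> 'a) set" where
  "Sdiag n K1 K2 = {M \<in> Amat n K1 K2. \<forall>i<n. M i n = 0}"

definition Jrad :: "nat \<Rightarrow> (nat \<Rightarrow> nat \<Rightarrow> 'a::field) set" where
  "Jrad n = {M. \<forall>i j. (i < n \<and> j = n) \<or> M i j = 0}"

definition centralizer_in :: "('c, 'm) ring_scheme \<Rightarrow> 'c set \<Rightarrow> 'c \<Rightarrow> 'c set" where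
  "centralizer_in R S x = {s \<in> S. s \<otimes>\<^bsub>R\<^esub> x = x \<otimes>\<^bsub>R\<^esub> s}"

definition maximal_subring_of :: "('c, 'm) ring_scheme \<Rightarrow> 'c set \<Rightarrow> 'c set \<Rightarrow> bool" where
  "maximal_subring_of R S M \<longleftrightarrow> nsubring R M \<and> M \<subset> S \<and>
     (\<forall>M'. nsubring R M' \<and> M \<subseteq> M' \<and> M' \<subset> S \<longrightarrow> M' = M)"

text \<open>Semisimple complements T of J in R: subrings T (automatically F_p-subalgebras)
with R = T (+) J as a direct sum of additive groups.\<close>
definition scompl :: "('c, 'm) ring_scheme \<Rightarrow> 'c set \<Rightarrow> 'c set set" where
  "scompl R J = {T. nsubring R T \<and> ssum R T J = carrier R \<and> T \<inter> J = {\<zero>\<^bsub>R\<^esub>}}"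

end

theory Submission
  imports Defs "HOL-Library.Function_Algebras"
begin

text \<open>Write \<open>R = S \<oplus> J\<close> with \<open>J\<^sup>2 = 0\<close>. The complements of \<open>J\<close> are the conjugates
  \<open>{s + [s, y] | s \<in> S}\<close> of \<open>S\<close>, one for each \<open>y \<in> J\<close>. An element \<open>s + x\<close> lies in one of them iff
  \<open>x\<close> is in the image of \<open>[s, -]\<close> on \<open>J\<close>; this image is all of \<open>J\<close> unless \<open>s\<close> centralizes a nonzero
  element of \<open>J\<close>, and then \<open>s + x \<in> M \<oplus> J\<close> for some \<open>M \<in> \<M>\<close>. Centralizers are constant on the
  \<open>(q\<^sup>n - 1)/(q - 1)\<close> lines of \<open>J\<close>, which bounds \<open>|\<M>|\<close>.

  For the lower bound, enlarge a minimal cover to maximal subrings. Since \<open>F\<^sub>q\<^sub>1 F\<^sub>q\<^sub>2 = F\<^sub>q\<close>,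
  \<open>J\<close> is a simple \<open>S\<close>-bimodule, so the members not containing \<open>J\<close> are complements. By
  \<open>\<sigma>\<close>-elementarity some \<open>s \<in> S\<close> avoids all members containing \<open>J\<close>, so the \<open>|J|\<close> elements
  \<open>s + x\<close> lie in distinct complements; and the members containing \<open>J\<close> meet \<open>S\<close> in maximal
  subrings covering the centralizers, so there are at least \<open>|\<M>|\<close> of them.\<close>

section \<open>Finite fields\<close>

lemma subfieldD:
  assumes "is_subfield K"
  shows "0 \<in> K" "1 \<in> K" "x \<in> K \<Longrightarrow> y \<in> K \<Longrightarrow> x + y \<in> K" "x \<in> K \<Longrightarrow> y \<in> K \<Longrightarrow> x * y \<in> K"
    "x \<in> K \<Longrightarrow> - x \<in> K" "x \<in> K \<Longrightarrow> inverse x \<in> K"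
  using assms by (auto simp: is_subfield_def)

lemma sum_mem_subfield:
  assumes "is_subfield K" "\<And>k. k \<in> A \<Longrightarrow> f k \<in> K"
  shows "sum f A \<in> K"
  using assms(2) by (induction A rule: infinite_finite_induct) (auto intro: subfieldD[OF assms(1)])

lemma card_orbits_free_action:
  fixes act :: "'g \<Rightarrow> 'x \<Rightarrow> 'x"
  assumes "finite X"
    and act_closed: "\<And>g x. g \<in> G \<Longrightarrow> x \<in> X \<Longrightarrow> act g x \<in> X"
    and unit: "e \<in> G" "\<And>x. x \<in> X \<Longrightarrow> act e x = x"
    and compose: "\<And>g h. g \<in> G \<Longrightarrow> h \<in> G \<Longrightarrow> mul g h \<in> G"
      "\<And>g h x. g \<in> G \<Longrightarrow> h \<in> G \<Longrightarrow> x \<in> X \<Longrightarrow> act g (act h x) = act (mul g h) x"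
    and inverse: "\<And>g. g \<in> G \<Longrightarrow> invert g \<in> G" "\<And>g x. g \<in> G \<Longrightarrow> x \<in> X \<Longrightarrow> act (invert g) (act g x) = x"
    and free: "\<And>x. x \<in> X \<Longrightarrow> inj_on (\<lambda>g. act g x) G"
  shows "card G * card ((\<lambda>x. (\<lambda>g. act g x) ` G) ` X) = card X"
proof -
  let ?orbit = "\<lambda>x. (\<lambda>g. act g x) ` G"
  have orbit_eq: "?orbit (act h x) = ?orbit x" if "h \<in> G" "x \<in> X" for h x
  proof
    show "?orbit (act h x) \<subseteq> ?orbit x"
      using that compose by auto
    have "act g x = act (mul g (invert h)) (act h x)" if "g \<in> G" for g
      using that \<open>h \<in> G\<close> \<open>x \<in> X\<close> inverse compose(2)[symmetric] act_closed by simp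
    then show "?orbit x \<subseteq> ?orbit (act h x)"
      using \<open>h \<in> G\<close> compose(1) inverse(1) by blast
  qed
  have "card G * card (?orbit ` X) = card (\<Union> (?orbit ` X))"
  proof (rule card_partition)
    show "finite (\<Union> (?orbit ` X))"
      using act_closed \<open>finite X\<close> by (auto intro: finite_subset)
    show "card c = card G" if "c \<in> ?orbit ` X" for c
      using that free card_image by blast
    show "c1 \<inter> c2 = {}" if c: "c1 \<in> ?orbit ` X" "c2 \<in> ?orbit ` X" "c1 \<noteq> c2" for c1 c2
    proof (rule ccontr)
      assume "c1 \<inter> c2 \<noteq> {}"
      then obtain x1 x2 g1 g2 where "x1 \<in> X" "x2 \<in> X" "g1 \<in> G" "g2 \<in> G"
        "c1 = ?orbit x1" "c2 = ?orbit x2" "act g1 x1 = act g2 x2"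
        using c by fastforce
      then have "c1 = c2"
        using orbit_eq[of g1 x1] orbit_eq[of g2 x2] by simp
      then show False
        using \<open>c1 \<noteq> c2\<close> by simp
    qed
  qed (use \<open>finite X\<close> in simp)
  also have "\<Union> (?orbit ` X) = X"
  proof
    show "\<Union> (?orbit ` X) \<subseteq> X"
      using act_closed by (intro UN_least image_subsetI)
    show "X \<subseteq> \<Union> (?orbit ` X)"
    proof
      fix x assume "x \<in> X"
      then have "x \<in> ?orbit x"
        using unit by (metis rev_image_eqI)
      with \<open>x \<in> X\<close> show "x \<in> \<Union> (?orbit ` X)"
        by blast
    qed
  qed
  finally show ?thesis .
qed

lemma card_additive_subgroup_dvd:
  fixes L :: "'a::{ab_group_add,finite} set"
  assumes "0 \<in> L" "\<And>x y. x \<in> L \<Longrightarrow> y \<in> L \<Longrightarrow> x + y \<in> L" "\<And>x. x \<in> L \<Longrightarrow> - x \<in> L"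
  shows "card L dvd card (UNIV :: 'a set)"
proof -
  have "card L * card ((\<lambda>x. (\<lambda>l. l + x) ` L) ` UNIV) = card (UNIV :: 'a set)"
    by (rule card_orbits_free_action[where mul = "(+)" and e = 0 and invert = uminus])
      (simp_all add: assms add.assoc)
  then show ?thesis
    by (metis dvd_triv_left)
qed

lemma card_subfield_minus_one_dvd:
  fixes K L :: "'a::{field,finite} set"
  assumes K: "is_subfield K" and "0 \<in> L" and closed: "\<And>a x. a \<in> K \<Longrightarrow> x \<in> L \<Longrightarrow> a * x \<in> L"
  shows "card K - 1 dvd card L - 1"
proof -
  have "card (K - {0}) * card ((\<lambda>x. (\<lambda>a. a * x) ` (K - {0})) ` (L - {0})) = card (L - {0})"
  proof (rule card_orbits_free_action[where mul = "(*)" and e = 1 and invert = inverse])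
    show "inverse a * (a * x) = x" if "a \<in> K - {0}" for a x :: 'a
      using that by (simp add: mult.assoc[symmetric])
    show "inj_on (\<lambda>a. a * x) (K - {0})" if "x \<in> L - {0}" for x
      using that by (simp add: inj_on_def)
  qed (use subfieldD[OF K] closed in \<open>simp_all add: mult.assoc\<close>)
  moreover have "card (K - {0}) = card K - 1" "card (L - {0}) = card L - 1"
    using subfieldD(1)[OF K] \<open>0 \<in> L\<close> by (simp_all add: card_Diff_singleton)
  ultimately show ?thesis
    by (metis dvd_triv_left)
qed

lemma power_minus_one_dvd_imp_dvd:
  fixes p :: nat
  assumes "2 \<le> p" "1 \<le> d" "p ^ d - 1 dvd p ^ k - 1"
  shows "d dvd k"
  using assms(3)
proof (induction k rule: less_induct)
  case (less k)
  show ?case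
  proof (cases "k < d")
    case True
    show ?thesis
    proof (rule ccontr)
      assume "\<not> d dvd k"
      then have "0 < k"
        by (rule contrapos_np) simp
      have "1 < p ^ k"
        using \<open>0 < k\<close> assms(1) by (intro one_less_power) auto
      moreover have "p ^ k < p ^ d"
        using True assms(1) by (intro power_strict_increasing) auto
      ultimately have "0 < p ^ k - 1" "p ^ k - 1 < p ^ d - 1"
        by simp_all
      then show False
        using less.prems by (auto dest: dvd_imp_le)
    qed
  next
    case False
    have "p ^ k = p ^ (k - d) * p ^ d"
      using False by (simp add: power_add[symmetric])
    moreover have "1 \<le> p ^ (k - d)" "1 \<le> p ^ d"
      using assms(1) by simp_all
    ultimately have "p ^ k - 1 = p ^ (k - d) * (p ^ d - 1) + (p ^ (k - d) - 1)"
      by (simp add: diff_mult_distrib2)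
    then have "p ^ d - 1 dvd p ^ (k - d) - 1"
      using less.prems by (simp add: dvd_add_right_iff)
    then have "d dvd k - d"
      using less.IH[of "k - d"] assms(2) False by simp
    then show ?thesis
      using False by (simp add: dvd_minus_self)
  qed
qed

inductive_set compositum :: "'a::field set \<Rightarrow> 'a set \<Rightarrow> 'a set" for K1 K2 where
  zero: "0 \<in> compositum K1 K2"
| add_prod: "a \<in> K1 \<Longrightarrow> b \<in> K2 \<Longrightarrow> l \<in> compositum K1 K2 \<Longrightarrow> a * b + l \<in> compositum K1 K2"

context
  fixes K1 K2 :: "'a::field set"
  assumes K1: "is_subfield K1" and K2: "is_subfield K2"
begin

lemma compositum_add: "l \<in> compositum K1 K2 \<Longrightarrow> l' \<in> compositum K1 K2 \<Longrightarrow> l + l' \<in> compositum K1 K2"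
  by (induction l rule: compositum.induct) (auto simp: add.assoc intro: compositum.intros)

lemma compositum_uminus: "l \<in> compositum K1 K2 \<Longrightarrow> - l \<in> compositum K1 K2"
proof (induction l rule: compositum.induct)
  case (add_prod a b l)
  then have "(- a) * b + (- l) \<in> compositum K1 K2"
    by (intro compositum.add_prod subfieldD[OF K1])
  then show ?case
    by simp
qed (simp add: compositum.zero)

lemma subfield_subset_compositum: "K1 \<subseteq> compositum K1 K2" "K2 \<subseteq> compositum K1 K2"
proof safe
  fix a assume "a \<in> K1"
  then have "a * 1 + 0 \<in> compositum K1 K2"
    by (intro compositum.intros subfieldD[OF K2])
  then show "a \<in> compositum K1 K2"
    by simp
next
  fix b assume "b \<in> K2"
  then have "1 * b + 0 \<in> compositum K1 K2"
    by (intro compositum.intros subfieldD[OF K1])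
  then show "b \<in> compositum K1 K2"
    by simp
qed

lemma compositum_mult_prod:
  "l \<in> compositum K1 K2 \<Longrightarrow> a \<in> K1 \<Longrightarrow> b \<in> K2 \<Longrightarrow> a * b * l \<in> compositum K1 K2"
proof (induction l rule: compositum.induct)
  case (add_prod a' b' l)
  then have "(a * a') * (b * b') + a * b * l \<in> compositum K1 K2"
    by (intro compositum.add_prod subfieldD[OF K1] subfieldD[OF K2])
  then show ?case
    by (simp add: algebra_simps)
qed (simp add: compositum.zero)

lemma compositum_mult: "l \<in> compositum K1 K2 \<Longrightarrow> l' \<in> compositum K1 K2 \<Longrightarrow> l * l' \<in> compositum K1 K2"
  by (induction l rule: compositum.induct)
    (auto simp: distrib_right compositum.zero intro: compositum_add compositum_mult_prod)

end

text \<open>The ring generated by \<open>K1\<close> and \<open>K2\<close> is an additive subgroup, so it has order some \<open>p ^ k\<close>;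
  being a vector space over both subfields forces \<open>d1 dvd k\<close> and \<open>d2 dvd k\<close>.\<close>
lemma compositum_eq_UNIV:
  fixes K1 K2 :: "'a::{field,finite} set"
  assumes K1: "is_subfield K1" and K2: "is_subfield K2" and p: "prime p"
    and "1 \<le> d1" "1 \<le> d2" "card K1 = p ^ d1" "card K2 = p ^ d2"
    and card_UNIV: "card (UNIV :: 'a set) = p ^ lcm d1 d2"
  shows "compositum K1 K2 = UNIV"
proof -
  let ?L = "compositum K1 K2"
  have "2 \<le> p"
    using p by (simp add: prime_ge_2_nat)
  have "card ?L dvd p ^ lcm d1 d2"
    unfolding card_UNIV[symmetric]
    by (rule card_additive_subgroup_dvd) (use K1 K2 in \<open>auto intro: compositum.zero compositum_add compositum_uminus\<close>)
  then obtain k where k: "k \<le> lcm d1 d2" "card ?L = p ^ k"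
    using divides_primepow_nat[OF p] by blast
  have "card K - 1 dvd card ?L - 1" if "is_subfield K" "K \<subseteq> ?L" for K
    by (rule card_subfield_minus_one_dvd)
      (use that K1 K2 in \<open>auto intro: compositum.zero compositum_mult\<close>)
  then have "card K1 - 1 dvd card ?L - 1" "card K2 - 1 dvd card ?L - 1"
    using K1 K2 subfield_subset_compositum[OF K1 K2] by blast+
  then have "p ^ d1 - 1 dvd p ^ k - 1" "p ^ d2 - 1 dvd p ^ k - 1"
    using assms(6,7) k(2) by simp_all
  then have "lcm d1 d2 dvd k"
    using power_minus_one_dvd_imp_dvd \<open>2 \<le> p\<close> assms(4,5) by simp
  moreover have "k \<noteq> 0"
  proof
    assume "k = 0"
    moreover have "{0, 1} \<subseteq> ?L"
      using compositum.zero subfield_subset_compositum(1)[OF K1 K2] subfieldD(2)[OF K1] by auto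
    then have "2 \<le> card ?L"
      using card_mono[of ?L "{0, 1}"] by simp
    ultimately show False
      using k(2) by simp
  qed
  ultimately have "k = lcm d1 d2"
    using k(1) by (simp add: dvd_imp_le le_antisym)
  then show ?thesis
    using k(2) card_UNIV by (simp add: card_subset_eq)
qed

lemma geometric_sum_bound:
  fixes q k m :: nat
  assumes "2 \<le> q" "m * (q - 1) \<le> q ^ k - 1"
  shows "q ^ k + m \<le> (q ^ (k + 1) - 1) div (q - 1)"
proof -
  have "m \<le> (q ^ k - 1) div (q - 1)"
    using assms by (simp add: less_eq_div_iff_mult_less_eq)
  have "q ^ (k + 1) - 1 = (q ^ k - 1) + q ^ k * (q - 1)"
    using assms(1) one_le_power[of q k] by (simp add: algebra_simps diff_mult_distrib2)
  then have "(q ^ (k + 1) - 1) div (q - 1) = ((q ^ k - 1) + q ^ k * (q - 1)) div (q - 1)"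
    by (rule arg_cong)
  also have "\<dots> = q ^ k + (q ^ k - 1) div (q - 1)"
    using assms(1) by (subst div_mult_self1) simp_all
  finally show ?thesis
    using \<open>m \<le> (q ^ k - 1) div (q - 1)\<close> by simp
qed

lemma real_le_divide_of_mult_le:
  fixes q k m :: nat
  assumes "2 \<le> q" "m * (q - 1) \<le> q ^ k - 1"
  shows "real m \<le> (real q ^ k - 1) / (real q - 1)"
proof -
  have "real (m * (q - 1)) \<le> real (q ^ k - 1)"
    using assms(2) by (simp only: of_nat_le_iff)
  then have "real m * (real q - 1) \<le> real q ^ k - 1"
    using assms(1) one_le_power[of q k] by (simp add: of_nat_diff)
  then show ?thesis
    using assms(1) by (simp add: pos_le_divide_eq)
qed

lemma card_UNIV_field_ge_2: "2 \<le> card (UNIV :: 'a::{field,finite} set)"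
  using card_mono[of UNIV "{0, 1 :: 'a}"] by simp

section \<open>Covers and covering numbers\<close>

lemma ecard_image_le: "ecard (f ` C) \<le> ecard C"
  by (cases "finite C") (simp_all add: ecard_def card_image_le)

lemma ecard_mono: "A \<subseteq> B \<Longrightarrow> ecard A \<le> ecard B"
  by (cases "finite B") (simp_all add: ecard_def card_mono finite_subset)

lemma sigma_le_ecard: "is_cover R C \<Longrightarrow> sigma R \<le> ecard C"
  unfolding sigma_def by (rule INF_lower) simp

lemma nsubring_subset: "nsubring R H \<Longrightarrow> H \<subseteq> carrier R"
  by (simp add: nsubring_def)

lemma maximal_subring_ofD: "maximal_subring_of R S M \<Longrightarrow> nsubring R M \<and> M \<subset> S"
  by (simp add: maximal_subring_of_def)

lemma exists_minimal_cover:
  assumes "is_cover R C"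
  shows "\<exists>C0. minimal_cover R C0"
proof -
  let ?E = "ecard ` {C. is_cover R C}"
  have "(LEAST m. m \<in> ?E) \<in> ?E"
    by (rule LeastI_ex) (use assms in blast)
  moreover have "sigma R = (LEAST m. m \<in> ?E)"
    unfolding sigma_def Inf_enat_def using assms by auto
  ultimately have "sigma R \<in> ?E"
    by simp
  then obtain C0 where "is_cover R C0" "sigma R = ecard C0"
    by auto
  then show ?thesis
    unfolding minimal_cover_def by auto
qed

lemma exists_maximal_subring_of:
  assumes "finite S" "nsubring R H" "H \<subset> S"
  shows "\<exists>M. maximal_subring_of R S M \<and> H \<subseteq> M"
proof -
  let ?P = "{M. nsubring R M \<and> H \<subseteq> M \<and> M \<subset> S}"
  have "finite ?P"
    by (rule finite_subset[of _ "Pow S"]) (use assms(1) in auto)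
  moreover have "?P \<noteq> {}"
    using assms by auto
  ultimately obtain M where M: "M \<in> ?P" "\<forall>M'\<in>?P. M \<subseteq> M' \<longrightarrow> M = M'"
    by (meson finite_has_maximal)
  have "maximal_subring_of R S M"
    unfolding maximal_subring_of_def
  proof (intro conjI allI impI)
    show "nsubring R M" "M \<subset> S"
      using M(1) by auto
    fix M' assume "nsubring R M' \<and> M \<subseteq> M' \<and> M' \<subset> S"
    with M show "M' = M"
      by (metis (mono_tags, lifting) mem_Collect_eq order_trans)
  qed
  then show ?thesis
    using M(1) by blast
qed

lemma exists_minimal_cover_by_maximal_subrings:
  assumes "finite (carrier R)" "is_cover R C"
  shows "\<exists>C'. minimal_cover R C' \<and> (\<forall>H\<in>C'. maximal_subring_of R (carrier R) H)"
proof -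
  obtain C0 where C0: "minimal_cover R C0"
    using exists_minimal_cover[OF assms(2)] by blast
  have "\<exists>M. maximal_subring_of R (carrier R) M \<and> H \<subseteq> M" if "H \<in> C0" for H
  proof (rule exists_maximal_subring_of[OF assms(1)])
    show "nsubring R H" "H \<subset> carrier R"
      using C0 that nsubring_subset unfolding minimal_cover_def is_cover_def by auto
  qed
  then obtain enlarge where enlarge:
    "\<And>H. H \<in> C0 \<Longrightarrow> maximal_subring_of R (carrier R) (enlarge H)"
    "\<And>H. H \<in> C0 \<Longrightarrow> H \<subseteq> enlarge H"
    by metis
  have "\<Union> (enlarge ` C0) \<subseteq> carrier R"
    using enlarge(1) maximal_subring_ofD by blast
  moreover have "carrier R \<subseteq> \<Union> (enlarge ` C0)"
    using C0 enlarge(2) unfolding minimal_cover_def is_cover_def by blast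
  moreover have "nsubring R H' \<and> H' \<noteq> carrier R" if H': "H' \<in> enlarge ` C0" for H'
  proof -
    obtain H where "H \<in> C0" "H' = enlarge H"
      using H' by blast
    then show ?thesis
      using maximal_subring_ofD[OF enlarge(1)] by auto
  qed
  ultimately have cover: "is_cover R (enlarge ` C0)"
    unfolding is_cover_def by auto
  have "ecard (enlarge ` C0) \<le> ecard C0"
    by (rule ecard_image_le)
  also have "\<dots> = sigma R"
    using C0 unfolding minimal_cover_def by simp
  finally have "minimal_cover R (enlarge ` C0)"
    using sigma_le_ecard[OF cover] cover unfolding minimal_cover_def by simp
  then show ?thesis
    using enlarge by blast
qed

lemma is_cover_Quot:
  fixes R (structure)
  assumes I: "ideal I R" and C: "is_cover R C" and above: "\<And>H. H \<in> C \<Longrightarrow> I \<subseteq> H"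
  shows "is_cover (R Quot I) ((\<lambda>H. (+>) I ` H) ` C)"
proof -
  interpret ideal I R by (rule I)
  interpret h: ring_hom_ring R "R Quot I" "(+>) I" by (rule rcos_ring_hom_ring)
  have image_subring: "nsubring (R Quot I) ((+>) I ` H)" if H: "nsubring R H" for H
  proof -
    have HR: "H \<subseteq> carrier R"
      using H by (simp add: nsubring_def)
    have "\<zero>\<^bsub>R Quot I\<^esub> \<in> (+>) I ` H"
      using h.hom_zero H unfolding nsubring_def by force
    moreover have "\<ominus>\<^bsub>R Quot I\<^esub> (I +> a) = I +> (\<ominus> a)" "\<ominus> a \<in> H" if "a \<in> H" for a
    proof -
      have "a \<in> carrier R"
        using that HR by blast
      then show "\<ominus>\<^bsub>R Quot I\<^esub> (I +> a) = I +> (\<ominus> a)"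
        by (simp add: h.hom_a_inv)
      show "\<ominus> a \<in> H"
        using that H by (simp add: nsubring_def)
    qed
    moreover have "(I +> a) \<oplus>\<^bsub>R Quot I\<^esub> (I +> b) = I +> (a \<oplus> b)" "a \<oplus> b \<in> H"
      "(I +> a) \<otimes>\<^bsub>R Quot I\<^esub> (I +> b) = I +> (a \<otimes> b)" "a \<otimes> b \<in> H"
      if "a \<in> H" "b \<in> H" for a b
    proof -
      have "a \<in> carrier R" "b \<in> carrier R"
        using that HR by blast+
      then show "(I +> a) \<oplus>\<^bsub>R Quot I\<^esub> (I +> b) = I +> (a \<oplus> b)"
        "(I +> a) \<otimes>\<^bsub>R Quot I\<^esub> (I +> b) = I +> (a \<otimes> b)"
        by (simp_all add: h.hom_add h.hom_mult)
      show "a \<oplus> b \<in> H" "a \<otimes> b \<in> H"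
        using that H by (simp_all add: nsubring_def)
    qed
    ultimately show ?thesis
      using HR h.hom_closed unfolding nsubring_def by auto
  qed
  have image_proper: "(+>) I ` H \<noteq> carrier (R Quot I)" if H: "H \<in> C" for H
  proof
    assume full: "(+>) I ` H = carrier (R Quot I)"
    have H_subring: "nsubring R H" and "H \<noteq> carrier R"
      using C H unfolding is_cover_def by auto
    have "r \<in> H" if r: "r \<in> carrier R" for r
    proof -
      have "I +> r \<in> (+>) I ` H"
        using full h.hom_closed[OF r] by simp
      then obtain h where h: "h \<in> H" "I +> r = I +> h"
        by blast
      have "r \<in> I +> h"
        using a_rcos_self[OF r] h(2) by simp
      then obtain i where "i \<in> I" "r = i \<oplus> h"
        unfolding a_r_coset_def' by blast
      then show "r \<in> H"
        using H_subring above[OF H] h(1) unfolding nsubring_def by blast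
    qed
    then show False
      using \<open>H \<noteq> carrier R\<close> H_subring unfolding nsubring_def by blast
  qed
  have "\<Union> ((\<lambda>H. (+>) I ` H) ` C) = (+>) I ` carrier R"
    using C unfolding is_cover_def by blast
  also have "\<dots> = carrier (R Quot I)"
    unfolding FactRing_def A_RCOSETS_def' by auto
  finally show ?thesis
    using C image_subring image_proper unfolding is_cover_def by auto
qed
text \<open>Otherwise their images would cover \<open>R Quot I\<close> with at most \<open>\<sigma>(R)\<close> subrings.\<close>
lemma minimal_cover_members_above_ideal:
  assumes "sigma_elementary R" "ideal I R" "I \<noteq> {\<zero>\<^bsub>R\<^esub>}" "minimal_cover R C"
  shows "\<Union> {H \<in> C. I \<subseteq> H} \<noteq> carrier R"
proof
  assume covers: "\<Union> {H \<in> C. I \<subseteq> H} = carrier R"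
  let ?A = "{H \<in> C. I \<subseteq> H}"
  have "is_cover R ?A"
    using assms(4) covers unfolding minimal_cover_def is_cover_def by blast
  then have "sigma (R Quot I) \<le> ecard ((\<lambda>H. (+>\<^bsub>R\<^esub>) I ` H) ` ?A)"
    by (intro sigma_le_ecard is_cover_Quot assms(2)) auto
  also have "\<dots> \<le> ecard ?A"
    by (rule ecard_image_le)
  also have "\<dots> \<le> ecard C"
    by (rule ecard_mono) blast
  also have "\<dots> = sigma R"
    using assms(4) unfolding minimal_cover_def by simp
  finally have "sigma (R Quot I) \<le> sigma R" .
  moreover have "sigma R < sigma (R Quot I)"
    using assms(1-3) unfolding sigma_elementary_def by blast
  ultimately show False
    by simp
qed

section \<open>The ring \<open>A(n, q1, q2)\<close>\<close>

lemma mat_mul_assoc: "mat_mul N (mat_mul N A B) C = mat_mul N A (mat_mul N B C)"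
  unfolding mat_mul_def
  by (auto simp: sum_distrib_left sum_distrib_right mult.assoc intro!: ext) (rule sum.swap)

lemma mat_mul_add_left: "mat_mul N (A + B) C = mat_mul N A C + mat_mul N B C"
  by (simp add: mat_mul_def distrib_right sum.distrib fun_eq_iff)

lemma mat_mul_add_right: "mat_mul N C (A + B) = mat_mul N C A + mat_mul N C B"
  by (simp add: mat_mul_def distrib_left sum.distrib fun_eq_iff)

lemma mat_mul_diff_left: "mat_mul N (A - B) C = mat_mul N A C - mat_mul N B C"
  by (simp add: mat_mul_def left_diff_distrib sum_subtractf fun_eq_iff)

lemma mat_mul_diff_right: "mat_mul N C (A - B) = mat_mul N C A - mat_mul N C B"
  by (simp add: mat_mul_def right_diff_distrib sum_subtractf fun_eq_iff)

lemma mat_mul_uminus_left: "mat_mul N (- A) B = - mat_mul N A B"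
  by (simp add: mat_mul_def sum_negf fun_eq_iff)

lemma mat_mul_uminus_right: "mat_mul N A (- B) = - mat_mul N A B"
  by (simp add: mat_mul_def sum_negf fun_eq_iff)

lemma mat_mul_zero_left [simp]: "mat_mul N 0 A = 0"
  by (simp add: mat_mul_def fun_eq_iff)

lemma mat_mul_zero_right [simp]: "mat_mul N A 0 = 0"
  by (simp add: mat_mul_def fun_eq_iff)

lemmas mat_mul_distribs = mat_mul_add_left mat_mul_add_right mat_mul_diff_left mat_mul_diff_right
  mat_mul_uminus_left mat_mul_uminus_right

lemma sum_mat_apply: "(\<Sum>i\<in>F. f i) k l = (\<Sum>i\<in>F. f i k l)"
  by (induction F rule: infinite_finite_induct) simp_all

lemma mat_mul_Suc: "mat_mul (Suc n) A B i j = (\<Sum>k<n. A i k * B k j) + A i n * B n j"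
  unfolding mat_mul_def by simp

text \<open>Matrices are added with the pointwise operations of \<open>Function_Algebras\<close>, which coincide with
  the additive structure of \<open>Aring\<close> (see \<open>Aring_simps\<close>).\<close>

locale A_ring =
  fixes n :: nat and K1 K2 :: "'a::{field,finite} set"
  assumes K1: "is_subfield K1" and K2: "is_subfield K2"
begin

abbreviation "R \<equiv> Aring n K1 K2"
abbreviation "A \<equiv> Amat n K1 K2"
abbreviation "S \<equiv> Sdiag n K1 K2"
abbreviation "J \<equiv> Jrad n :: (nat \<Rightarrow> nat \<Rightarrow> 'a) set"

abbreviation mmul :: "(nat \<Rightarrow> nat \<Rightarrow> 'a) \<Rightarrow> (nat \<Rightarrow> nat \<Rightarrow> 'a) \<Rightarrow> nat \<Rightarrow> nat \<Rightarrow> 'a"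
    (infixl \<open>\<cdot>\<close> 70)
  where "x \<cdot> y \<equiv> mat_mul (Suc n) x y"

lemma Aring_simps [simp]:
  "carrier R = A" "monoid.mult R = mat_mul (Suc n)" "monoid.one R = mat_one (Suc n)"
  "zero R = 0" "add R = (+)"
  by (simp_all add: Aring_def fun_eq_iff)

lemma Amat_outside: "M \<in> A \<Longrightarrow> n < i \<or> n < j \<Longrightarrow> M i j = 0"
  unfolding Amat_def by blast

lemma zero_mem_A: "0 \<in> A"
  by (simp add: Amat_def subfieldD[OF K1] subfieldD[OF K2])

lemma add_mem_A: "M \<in> A \<Longrightarrow> N \<in> A \<Longrightarrow> M + N \<in> A"
  by (simp add: Amat_def subfieldD[OF K1] subfieldD[OF K2])

lemma uminus_mem_A: "M \<in> A \<Longrightarrow> - M \<in> A"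
  by (simp add: Amat_def subfieldD[OF K1] subfieldD[OF K2])

lemma mmul_mem_A:
  assumes "M \<in> A" "N \<in> A"
  shows "M \<cdot> N \<in> A"
proof -
  have "(M \<cdot> N) i j = 0" if "n < i \<or> n < j" for i j
    using assms that by (auto simp: Amat_def mat_mul_def)
  moreover have "(M \<cdot> N) i j \<in> K1" if "i < n" "j < n" for i j
    using assms that unfolding mat_mul_Suc
    by (auto simp: Amat_def intro!: subfieldD[OF K1] sum_mem_subfield[OF K1])
  moreover have "(M \<cdot> N) n j = 0" if "j < n" for j
    using assms that unfolding mat_mul_Suc by (auto simp: Amat_def)
  moreover have "(M \<cdot> N) n n \<in> K2"
    using assms unfolding mat_mul_Suc by (auto simp: Amat_def intro!: subfieldD[OF K2])
  ultimately show ?thesis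
    by (simp add: Amat_def)
qed

lemma one_mem_A: "mat_one (Suc n) \<in> A"
  by (auto simp: Amat_def mat_one_def subfieldD[OF K1] subfieldD[OF K2])

lemma mmul_one_left:
  assumes "M \<in> A"
  shows "mat_one (Suc n) \<cdot> M = M"
proof (intro ext)
  fix i j
  have "(mat_one (Suc n) \<cdot> M) i j = (\<Sum>k<Suc n. if k = i then (if i < Suc n then M i j else 0) else 0)"
    unfolding mat_mul_def mat_one_def by (intro sum.cong) auto
  also have "\<dots> = M i j"
    using Amat_outside[OF assms, of i j] by (simp add: sum.delta)
  finally show "(mat_one (Suc n) \<cdot> M) i j = M i j" .
qed

lemma mmul_one_right:
  assumes "M \<in> A"
  shows "M \<cdot> mat_one (Suc n) = M"
proof (intro ext)
  fix i j
  have "(M \<cdot> mat_one (Suc n)) i j = (\<Sum>k<Suc n. if k = j then (if j < Suc n then M i j else 0) else 0)"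
    unfolding mat_mul_def mat_one_def by (intro sum.cong) auto
  also have "\<dots> = M i j"
    using Amat_outside[OF assms, of i j] by (simp add: sum.delta)
  finally show "(M \<cdot> mat_one (Suc n)) i j = M i j" .
qed

lemma ring_R: "ring R"
proof (rule ringI)
  show "abelian_group R"
  proof (rule abelian_groupI)
    show "\<exists>y\<in>carrier R. y \<oplus>\<^bsub>R\<^esub> x = \<zero>\<^bsub>R\<^esub>" if "x \<in> carrier R" for x
      using that uminus_mem_A by (intro bexI[of _ "- x"]) simp_all
  qed (simp_all add: add_mem_A zero_mem_A add.assoc add.commute)
  show "monoid R"
    by (rule monoidI) (auto simp: mmul_mem_A one_mem_A mmul_one_left mmul_one_right mat_mul_assoc)
qed (simp_all add: mat_mul_add_left mat_mul_add_right)

lemma a_inv_R: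
  assumes "M \<in> A"
  shows "\<ominus>\<^bsub>R\<^esub> M = - M"
proof -
  interpret ring R
    by (rule ring_R)
  show ?thesis
    using assms by (intro minus_equality) (simp_all add: uminus_mem_A)
qed

lemma nsubring_R_iff:
  "nsubring R H \<longleftrightarrow> H \<subseteq> A \<and> 0 \<in> H \<and> (\<forall>a\<in>H. - a \<in> H) \<and> (\<forall>a\<in>H. \<forall>b\<in>H. a + b \<in> H \<and> a \<cdot> b \<in> H)"
proof -
  have "(\<forall>a\<in>H. \<ominus>\<^bsub>R\<^esub> a \<in> H) \<longleftrightarrow> (\<forall>a\<in>H. - a \<in> H)" if "H \<subseteq> A"
    using that a_inv_R by (intro ball_cong) auto
  then show ?thesis
    unfolding nsubring_def by auto
qed

lemma nsubringD:
  assumes "nsubring R H"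
  shows "H \<subseteq> A" "0 \<in> H" "a \<in> H \<Longrightarrow> - a \<in> H" "a \<in> H \<Longrightarrow> b \<in> H \<Longrightarrow> a + b \<in> H"
    "a \<in> H \<Longrightarrow> b \<in> H \<Longrightarrow> a \<cdot> b \<in> H"
  using assms unfolding nsubring_R_iff by blast+

lemma nsubring_diff: "nsubring R H \<Longrightarrow> a \<in> H \<Longrightarrow> b \<in> H \<Longrightarrow> a - b \<in> H"
  unfolding diff_conv_add_uminus by (intro nsubringD)

lemma ssum_R: "ssum R X Y = {x + y | x y. x \<in> X \<and> y \<in> Y}"
  by (simp add: ssum_def)

lemma finite_A: "finite A"
proof -
  have "M \<in> curry ` {f. \<forall>x. x \<notin> {..n} \<times> {..n} \<longrightarrow> f x = 0}" if "M \<in> A" for M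
  proof (rule image_eqI)
    show "M = curry (case_prod M)"
      by simp
    show "case_prod M \<in> {f. \<forall>x. x \<notin> {..n} \<times> {..n} \<longrightarrow> f x = 0}"
      using Amat_outside[OF that] by (auto simp: not_le)
  qed
  then have "A \<subseteq> curry ` {f. \<forall>x. x \<notin> {..n} \<times> {..n} \<longrightarrow> f x = 0}"
    by blast
  moreover have "finite {f :: nat \<times> nat \<Rightarrow> 'a. \<forall>x. x \<notin> {..n} \<times> {..n} \<longrightarrow> f x = 0}"
    using finite_set_of_finite_funs[of "{..n} \<times> {..n}" UNIV "0 :: 'a"] by simp
  ultimately show ?thesis
    using finite_subset by blast
qed


lemma Jrad_iff: "x \<in> J \<longleftrightarrow> (\<forall>i j. x i j \<noteq> 0 \<longrightarrow> i < n \<and> j = n)"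
  unfolding Jrad_def by blast

lemma J_entry_zero: "x \<in> J \<Longrightarrow> \<not> (i < n \<and> j = n) \<Longrightarrow> x i j = 0"
  unfolding Jrad_iff by blast

lemma J_memI: "(\<And>i j. \<not> (i < n \<and> j = n) \<Longrightarrow> x i j = 0) \<Longrightarrow> x \<in> J"
  unfolding Jrad_def by blast

lemma zero_mem_J: "0 \<in> J"
  by (simp add: Jrad_def)

lemma add_mem_J: "x \<in> J \<Longrightarrow> y \<in> J \<Longrightarrow> x + y \<in> J"
  by (rule J_memI) (simp add: J_entry_zero)

lemma uminus_mem_J: "x \<in> J \<Longrightarrow> - x \<in> J"
  by (rule J_memI) (simp add: J_entry_zero)

lemma diff_mem_J: "x \<in> J \<Longrightarrow> y \<in> J \<Longrightarrow> x - y \<in> J"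
  by (rule J_memI) (simp add: J_entry_zero)

lemma J_subset_A: "J \<subseteq> A"
  by (auto simp: Amat_def J_entry_zero subfieldD[OF K1] subfieldD[OF K2])

lemma mmul_J_left: "x \<in> J \<Longrightarrow> (x \<cdot> M) i j = x i n * M n j"
  by (simp add: mat_mul_Suc J_entry_zero)

lemma mmul_J_right: "x \<in> J \<Longrightarrow> (M \<cdot> x) i j = (if j = n then (\<Sum>k<n. M i k * x k n) else 0)"
  by (simp add: mat_mul_Suc J_entry_zero)

lemma J_mmul_J: "x \<in> J \<Longrightarrow> y \<in> J \<Longrightarrow> x \<cdot> y = 0"
  by (simp add: fun_eq_iff mmul_J_left J_entry_zero)

lemma A_mmul_J:
  assumes "M \<in> A" "x \<in> J"
  shows "M \<cdot> x \<in> J"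
proof -
  have "M n k = 0" if "k < n" for k
    using assms(1) that by (simp add: Amat_def)
  moreover have "M i k = 0" if "n < i" for i k
    using Amat_outside[OF assms(1)] that by simp
  ultimately have "(M \<cdot> x) i j = 0" if "\<not> (i < n \<and> j = n)" for i j
    using that by (cases "i = n") (auto simp: mmul_J_right[OF assms(2)] not_less)
  then show ?thesis
    unfolding Jrad_iff by blast
qed

lemma J_mmul_A:
  assumes "M \<in> A" "x \<in> J"
  shows "x \<cdot> M \<in> J"
proof -
  have "M n j = 0" if "j \<noteq> n" for j
    using assms(1) that Amat_outside[OF assms(1)] by (cases "j < n") (auto simp: Amat_def)
  then have "(x \<cdot> M) i j = 0" if "\<not> (i < n \<and> j = n)" for i j
    using that J_entry_zero[OF assms(2), of i n] by (auto simp: mmul_J_left[OF assms(2)])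
  then show ?thesis
    unfolding Jrad_iff by blast
qed

lemma Sdiag_entries: "s \<in> S \<Longrightarrow> i < n \<Longrightarrow> s i n = 0" "s \<in> S \<Longrightarrow> j < n \<Longrightarrow> s n j = 0"
  unfolding Sdiag_def Amat_def by blast+

lemma S_subset_A: "S \<subseteq> A"
  unfolding Sdiag_def by blast

lemma nsubring_S: "nsubring R S"
  unfolding nsubring_R_iff Sdiag_def
  by (auto simp: zero_mem_A add_mem_A uminus_mem_A mmul_mem_A mat_mul_Suc intro!: sum.neutral)

lemma S_inter_J: "s \<in> S \<Longrightarrow> s \<in> J \<Longrightarrow> s = 0"
  unfolding Sdiag_def Jrad_iff by (auto simp: fun_eq_iff)

definition diag_part :: "(nat \<Rightarrow> nat \<Rightarrow> 'a) \<Rightarrow> nat \<Rightarrow> nat \<Rightarrow> 'a"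
  where "diag_part M = (\<lambda>i j. if i < n \<and> j = n then 0 else M i j)"

definition rad_part :: "(nat \<Rightarrow> nat \<Rightarrow> 'a) \<Rightarrow> nat \<Rightarrow> nat \<Rightarrow> 'a"
  where "rad_part M = (\<lambda>i j. if i < n \<and> j = n then M i j else 0)"

lemma diag_part_mem_S: "M \<in> A \<Longrightarrow> diag_part M \<in> S"
  unfolding Sdiag_def Amat_def diag_part_def by auto

lemma rad_part_mem_J: "rad_part M \<in> J"
  unfolding Jrad_def rad_part_def by simp

lemma diag_part_add_rad_part: "diag_part M + rad_part M = M"
  unfolding diag_part_def rad_part_def by (simp add: fun_eq_iff)

lemma S_J_decomp_unique:
  assumes "s \<in> S" "x \<in> J" "t \<in> S" "y \<in> J" "s + x = t + y"
  shows "s = t" "x = y"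
proof -
  have "s - t = y - x"
    using assms(5) by (simp add: algebra_simps)
  moreover have "s - t \<in> S" "y - x \<in> J"
    using assms(1-4) nsubring_S by (simp_all add: nsubring_diff diff_mem_J)
  ultimately have "s - t = 0"
    using S_inter_J by metis
  then show "s = t" "x = y"
    using assms(5) by simp_all
qed

definition commutator :: "(nat \<Rightarrow> nat \<Rightarrow> 'a) \<Rightarrow> (nat \<Rightarrow> nat \<Rightarrow> 'a) \<Rightarrow> nat \<Rightarrow> nat \<Rightarrow> 'a"
  where "commutator s y = s \<cdot> y - y \<cdot> s"

lemma commutator_mem_J: "s \<in> A \<Longrightarrow> y \<in> J \<Longrightarrow> commutator s y \<in> J"
  unfolding commutator_def by (intro diff_mem_J A_mmul_J J_mmul_A)

lemma commutator_eq_0_iff: "commutator s y = 0 \<longleftrightarrow> s \<cdot> y = y \<cdot> s"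
  by (simp add: commutator_def)

lemma commutator_zero_left [simp]: "commutator 0 y = 0"
  by (simp add: commutator_def)

lemma commutator_zero_right [simp]: "commutator s 0 = 0"
  by (simp add: commutator_def)

lemma commutator_add_left: "commutator (s + t) y = commutator s y + commutator t y"
  by (simp add: commutator_def mat_mul_distribs)

lemma commutator_uminus_left: "commutator (- s) y = - commutator s y"
  by (simp add: commutator_def mat_mul_distribs)

lemma commutator_diff_right: "commutator s (y - z) = commutator s y - commutator s z"
  by (simp add: commutator_def mat_mul_distribs)


subsection \<open>Complements of \<open>J\<close>\<close>

text \<open>For \<open>y \<in> J\<close> the conjugate \<open>(1 - y) s (1 + y)\<close> of \<open>s \<in> S\<close> equals \<open>s + commutator s y\<close>,
  since \<open>y s y = 0\<close>; so \<open>conj_S y\<close> is the conjugate \<open>(1 + y)\<^sup>-\<^sup>1 S (1 + y)\<close> of the paper.\<close>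
definition conj_S :: "(nat \<Rightarrow> nat \<Rightarrow> 'a) \<Rightarrow> (nat \<Rightarrow> nat \<Rightarrow> 'a) set"
  where "conj_S y = {s + commutator s y | s. s \<in> S}"

lemma conj_S_mmul:
  assumes "s \<in> S" "t \<in> S" "y \<in> J"
  shows "(s + commutator s y) \<cdot> (t + commutator t y) = s \<cdot> t + commutator (s \<cdot> t) y"
proof -
  have "s \<in> A" "t \<in> A"
    using assms S_subset_A by auto
  then have "commutator s y \<cdot> commutator t y = 0"
    using assms(3) by (intro J_mmul_J commutator_mem_J)
  then show ?thesis
    unfolding commutator_def by (simp add: mat_mul_distribs mat_mul_assoc algebra_simps)
qed

lemma nsubring_conj_S:
  assumes "y \<in> J"
  shows "nsubring R (conj_S y)"
  unfolding nsubring_R_iff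
proof (intro conjI ballI)
  show "conj_S y \<subseteq> A"
    unfolding conj_S_def using S_subset_A commutator_mem_J[OF _ assms] J_subset_A add_mem_A by blast
  show "0 \<in> conj_S y"
    unfolding conj_S_def using nsubringD(2)[OF nsubring_S] by force
  fix a assume "a \<in> conj_S y"
  then obtain s where s: "s \<in> S" "a = s + commutator s y"
    unfolding conj_S_def by blast
  show "- a \<in> conj_S y"
    unfolding conj_S_def using s nsubringD(3)[OF nsubring_S]
    by (intro CollectI exI[of _ "- s"]) (simp add: commutator_uminus_left)
  fix b assume "b \<in> conj_S y"
  then obtain t where t: "t \<in> S" "b = t + commutator t y"
    unfolding conj_S_def by blast
  show "a + b \<in> conj_S y"
    unfolding conj_S_def using s t nsubringD(4)[OF nsubring_S]
    by (intro CollectI exI[of _ "s + t"]) (simp add: commutator_add_left algebra_simps)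
  show "a \<cdot> b \<in> conj_S y"
    unfolding conj_S_def using s t assms nsubringD(5)[OF nsubring_S]
    by (intro CollectI exI[of _ "s \<cdot> t"]) (simp add: conj_S_mmul)
qed

lemma commutator_eq_of_mem_conj_S:
  assumes "y \<in> J" "s \<in> S" "x \<in> J" "s + x \<in> conj_S y"
  shows "x = commutator s y"
proof -
  obtain t where t: "t \<in> S" "s + x = t + commutator t y"
    using assms(4) unfolding conj_S_def by blast
  moreover have "commutator t y \<in> J"
    using t(1) S_subset_A assms(1) by (intro commutator_mem_J) auto
  ultimately show ?thesis
    using S_J_decomp_unique[OF assms(2,3)] by metis
qed

lemma conj_S_mem_scompl:
  assumes "y \<in> J"
  shows "conj_S y \<in> scompl R J"
  unfolding scompl_def
proof (intro CollectI conjI)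
  show "nsubring R (conj_S y)"
    by (rule nsubring_conj_S[OF assms])
  show "ssum R (conj_S y) J = carrier R"
  proof
    show "ssum R (conj_S y) J \<subseteq> carrier R"
      using nsubringD(1)[OF nsubring_conj_S[OF assms]] J_subset_A add_mem_A
      unfolding ssum_R by auto
    show "carrier R \<subseteq> ssum R (conj_S y) J"
    proof
      fix r assume "r \<in> carrier R"
      then have s: "diag_part r \<in> S"
        by (simp add: diag_part_mem_S)
      let ?c = "commutator (diag_part r) y"
      have "r = (diag_part r + ?c) + (rad_part r - ?c)"
        using diag_part_add_rad_part[of r] by (simp add: algebra_simps)
      moreover have "diag_part r + ?c \<in> conj_S y"
        unfolding conj_S_def using s by blast
      moreover have "rad_part r - ?c \<in> J"
        using s S_subset_A assms by (intro diff_mem_J rad_part_mem_J commutator_mem_J) auto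
      ultimately show "r \<in> ssum R (conj_S y) J"
        unfolding ssum_R by blast
    qed
  qed
  show "conj_S y \<inter> J = {\<zero>\<^bsub>R\<^esub>}"
  proof
    show "{\<zero>\<^bsub>R\<^esub>} \<subseteq> conj_S y \<inter> J"
      using nsubringD(2)[OF nsubring_conj_S[OF assms]] zero_mem_J by simp
    show "conj_S y \<inter> J \<subseteq> {\<zero>\<^bsub>R\<^esub>}"
    proof
      fix a assume a: "a \<in> conj_S y \<inter> J"
      then obtain s where s: "s \<in> S" "a = s + commutator s y"
        unfolding conj_S_def by blast
      have "commutator s y \<in> J"
        using s(1) S_subset_A assms by (intro commutator_mem_J) auto
      moreover have "s = a - commutator s y"
        using s(2) by simp
      ultimately have "s \<in> J"
        using a diff_mem_J by (metis IntD2)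
      then have "s = 0"
        using S_inter_J s(1) by blast
      then show "a \<in> {\<zero>\<^bsub>R\<^esub>}"
        using s(2) by simp
    qed
  qed
qed

definition corner :: "nat \<Rightarrow> nat \<Rightarrow> 'a"
  where "corner = (\<lambda>i j. if i = n \<and> j = n then 1 else 0)"

lemma corner_mem_S: "corner \<in> S"
  unfolding Sdiag_def Amat_def corner_def using subfieldD[OF K1] subfieldD[OF K2] by auto

lemma J_mmul_corner: "z \<in> J \<Longrightarrow> z \<cdot> corner = z"
  by (auto simp: fun_eq_iff mmul_J_left corner_def J_entry_zero)

lemma corner_mmul_J: "z \<in> J \<Longrightarrow> corner \<cdot> z = 0"
  by (auto simp: fun_eq_iff mmul_J_right corner_def intro!: sum.neutral)

lemma S_mmul_corner:
  assumes "s \<in> S"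
  shows "s \<cdot> corner = corner \<cdot> s"
proof (intro ext)
  fix i j
  have out: "s i' j' = 0" if "n < i' \<or> n < j'" for i' j'
    using assms that S_subset_A Amat_outside by blast
  have "s i' n = 0" "s n i' = 0" if "i' \<noteq> n" for i'
    using that out[of i' n] out[of n i'] Sdiag_entries[OF assms, of i'] by (cases "i' < n"; simp)+
  with out have "(s \<cdot> corner) i j = (if i = n \<and> j = n then s n n else 0)"
    "(corner \<cdot> s) i j = (if i = n \<and> j = n then s n n else 0)"
    by (auto simp: mat_mul_Suc corner_def intro!: sum.neutral)
  then show "(s \<cdot> corner) i j = (corner \<cdot> s) i j"
    by simp
qed

lemma scompl_subset_imp_eq:
  assumes "T1 \<in> scompl R J" "T2 \<in> scompl R J" "T1 \<subseteq> T2"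
  shows "T1 = T2"
proof
  show "T2 \<subseteq> T1"
  proof
    fix u assume "u \<in> T2"
    then have "u \<in> ssum R T1 J"
      using assms(1,2) nsubringD(1) unfolding scompl_def by auto
    then obtain t x where tx: "t \<in> T1" "x \<in> J" "u = t + x"
      unfolding ssum_R by blast
    then have "x \<in> T2 \<inter> J"
      using \<open>u \<in> T2\<close> assms(2,3) nsubring_diff[of T2 u t] unfolding scompl_def by auto
    then have "x = 0"
      using assms(2) unfolding scompl_def by auto
    then show "u \<in> T1"
      using tx by simp
  qed
qed (rule assms(3))

text \<open>A complement \<open>T\<close> is \<open>conj_S x\<close> for the \<open>J\<close>-component \<open>x\<close> of the corner idempotent: writing
  \<open>corner = t + x\<close> and \<open>s = t' + z\<close> with \<open>t, t' \<in> T\<close>, the element \<open>t' - commutator t' t\<close> of \<open>T\<close>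
  equals \<open>s + commutator s x\<close>.\<close>
lemma scompl_eq_conj_S: "scompl R J = conj_S ` J"
proof
  show "conj_S ` J \<subseteq> scompl R J"
    using conj_S_mem_scompl by blast
  show "scompl R J \<subseteq> conj_S ` J"
  proof
    fix T assume T: "T \<in> scompl R J"
    then have T_subring: "nsubring R T" and T_sum: "ssum R T J = A"
      unfolding scompl_def by auto
    have split: "\<exists>t z. t \<in> T \<and> z \<in> J \<and> r = t + z" if "r \<in> A" for r
      using that T_sum unfolding ssum_R by blast
    obtain t x where t: "t \<in> T" and x: "x \<in> J" and corner_eq: "corner = t + x"
      using split[of corner] corner_mem_S S_subset_A by blast
    have "s + commutator s x \<in> T" if s: "s \<in> S" for s
    proof -
      obtain t' z where t': "t' \<in> T" and z: "z \<in> J" and s_eq: "s = t' + z"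
        using split[of s] s S_subset_A by blast
      have "t' - commutator t' t \<in> T"
        unfolding commutator_def using t t' T_subring by (intro nsubring_diff nsubringD(5))
      moreover have "t' - commutator t' t = s + commutator s x"
      proof -
        have "t = corner - x" "t' = s - z"
          using corner_eq s_eq by (simp_all add: algebra_simps)
        then show ?thesis
          unfolding commutator_def \<open>t = corner - x\<close> \<open>t' = s - z\<close>
          by (simp add: mat_mul_distribs J_mmul_corner[OF z] corner_mmul_J[OF z] J_mmul_J[OF z x]
              J_mmul_J[OF x z] S_mmul_corner[OF s] algebra_simps)
      qed
      ultimately show ?thesis
        by simp
    qed
    then have "conj_S x \<subseteq> T"
      unfolding conj_S_def by blast
    then have "conj_S x = T"
      using scompl_subset_imp_eq conj_S_mem_scompl[OF x] T by blast
    then show "T \<in> conj_S ` J"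
      using x by blast
  qed
qed

lemma finite_J: "finite J"
  using finite_subset[OF J_subset_A finite_A] .

lemma card_scompl_le: "card (scompl R J) \<le> card J"
  unfolding scompl_eq_conj_S by (rule card_image_le[OF finite_J])


subsection \<open>The cover by complements and the subrings \<open>M \<oplus> J\<close>\<close>

lemma nsubring_ssum_J:
  assumes M: "nsubring R M"
  shows "nsubring R (ssum R M J)"
  unfolding nsubring_R_iff ssum_R
proof (intro conjI ballI)
  show "{a + x |a x. a \<in> M \<and> x \<in> J} \<subseteq> A"
    using nsubringD(1)[OF M] J_subset_A add_mem_A by blast
  have "(0 :: nat \<Rightarrow> nat \<Rightarrow> 'a) = 0 + 0"
    by simp
  then show "0 \<in> {a + x |a x. a \<in> M \<and> x \<in> J}"
    using nsubringD(2)[OF M] zero_mem_J by blast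
  fix u assume "u \<in> {a + x |a x. a \<in> M \<and> x \<in> J}"
  then obtain a x where ax: "a \<in> M" "x \<in> J" "u = a + x"
    by blast
  show "- u \<in> {a + x |a x. a \<in> M \<and> x \<in> J}"
    using ax nsubringD(3)[OF M] uminus_mem_J by (intro CollectI exI[of _ "- a"] exI[of _ "- x"]) simp
  fix v assume "v \<in> {a + x |a x. a \<in> M \<and> x \<in> J}"
  then obtain b y where bq: "b \<in> M" "y \<in> J" "v = b + y"
    by blast
  show "u + v \<in> {a + x |a x. a \<in> M \<and> x \<in> J}"
    using ax bq nsubringD(4)[OF M] add_mem_J
    by (intro CollectI exI[of _ "a + b"] exI[of _ "x + y"]) (simp add: algebra_simps)
  have "a \<in> A" "b \<in> A"
    using ax bq nsubringD(1)[OF M] by auto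
  then have "a \<cdot> y + x \<cdot> b \<in> J"
    using ax(2) bq(2) by (intro add_mem_J A_mmul_J J_mmul_A)
  moreover have "u \<cdot> v = a \<cdot> b + (a \<cdot> y + x \<cdot> b)"
    using ax bq J_mmul_J[OF ax(2) bq(2)] by (simp add: mat_mul_distribs algebra_simps)
  ultimately show "u \<cdot> v \<in> {a + x |a x. a \<in> M \<and> x \<in> J}"
    using ax(1) bq(1) nsubringD(5)[OF M] by blast
qed

lemma mem_ssum_J: "s \<in> M \<Longrightarrow> x \<in> J \<Longrightarrow> s + x \<in> ssum R M J"
  unfolding ssum_R by blast

lemma ssum_J_proper:
  assumes "M \<subset> S"
  shows "ssum R M J \<noteq> A"
proof
  assume full: "ssum R M J = A"
  obtain s where s: "s \<in> S" "s \<notin> M"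
    using assms by blast
  then obtain a x where ax: "a \<in> M" "x \<in> J" "s = a + x"
    using full S_subset_A unfolding ssum_R by blast
  moreover have "a \<in> S"
    using ax(1) assms by blast
  ultimately have "s = a"
    using S_J_decomp_unique(1)[OF s(1) zero_mem_J, of a x] by simp
  then show False
    using ax s by simp
qed

lemma J_nonzero:
  assumes "1 \<le> n"
  shows "\<exists>x\<in>J. x \<noteq> 0"
proof
  let ?x = "(\<lambda>i j. if i = 0 \<and> j = n then 1 else 0) :: nat \<Rightarrow> nat \<Rightarrow> 'a"
  show "?x \<in> J"
    using assms by (intro J_memI) auto
  show "?x \<noteq> 0"
    by (auto simp: fun_eq_iff)
qed

lemma scompl_proper:
  assumes "1 \<le> n" "T \<in> scompl R J"
  shows "T \<noteq> A"
proof
  assume "T = A"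
  then have "J \<subseteq> {0}"
    using assms(2) J_subset_A unfolding scompl_def by auto
  then show False
    using J_nonzero[OF assms(1)] by auto
qed

lemma centralizer_in_R: "centralizer_in R S x = {s \<in> S. s \<cdot> x = x \<cdot> s}"
  unfolding centralizer_in_def by simp

text \<open>\<open>commutator s\<close> is an additive endomorphism of the finite group \<open>J\<close>, so it is onto iff its
  kernel is trivial.\<close>
lemma commutator_image_eq_J_iff:
  assumes "s \<in> A"
  shows "commutator s ` J = J \<longleftrightarrow> (\<forall>y\<in>J. y \<noteq> 0 \<longrightarrow> s \<cdot> y \<noteq> y \<cdot> s)"
proof -
  have into: "commutator s ` J \<subseteq> J"
    using commutator_mem_J[OF assms] by blast
  have "inj_on (commutator s) J \<longleftrightarrow> (\<forall>y\<in>J. y \<noteq> 0 \<longrightarrow> s \<cdot> y \<noteq> y \<cdot> s)"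
  proof
    assume inj: "inj_on (commutator s) J"
    show "\<forall>y\<in>J. y \<noteq> 0 \<longrightarrow> s \<cdot> y \<noteq> y \<cdot> s"
      using inj_onD[OF inj, of _ 0] zero_mem_J commutator_eq_0_iff by force
  next
    assume "\<forall>y\<in>J. y \<noteq> 0 \<longrightarrow> s \<cdot> y \<noteq> y \<cdot> s"
    then have "y1 - y2 = 0" if "y1 \<in> J" "y2 \<in> J" "commutator s y1 = commutator s y2" for y1 y2
      using that diff_mem_J commutator_diff_right[of s y1 y2] commutator_eq_0_iff by force
    then show "inj_on (commutator s) J"
      by (auto intro: inj_onI)
  qed
  moreover have "inj_on (commutator s) J \<longleftrightarrow> commutator s ` J = J"
    using into finite_J by (metis endo_inj_surj eq_card_imp_inj_on)
  ultimately show ?thesis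
    by blast
qed

lemma is_cover_scompl_ssum:
  assumes "1 \<le> n"
    and max: "\<forall>M\<in>\<M>. maximal_subring_of R S M"
    and covers: "(\<Union>x \<in> J - {0}. centralizer_in R S x) \<subseteq> \<Union>\<M>"
  shows "is_cover R (scompl R J \<union> (\<lambda>M. ssum R M J) ` \<M>)"
proof -
  have members: "nsubring R H \<and> H \<noteq> A" if H: "H \<in> scompl R J \<union> (\<lambda>M. ssum R M J) ` \<M>" for H
  proof (cases "H \<in> scompl R J")
    case True
    then show ?thesis
      using scompl_proper[OF assms(1)] unfolding scompl_def by blast
  next
    case False
    then obtain M where "M \<in> \<M>" "H = ssum R M J"
      using H by blast
    then show ?thesis
      using max maximal_subring_ofD nsubring_ssum_J ssum_J_proper by metis
  qed
  have "r \<in> \<Union> (scompl R J \<union> (\<lambda>M. ssum R M J) ` \<M>)" if r: "r \<in> A" for r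
  proof (cases "diag_part r \<in> \<Union>\<M>")
    case True
    then obtain M where "M \<in> \<M>" "diag_part r \<in> M"
      by blast
    then show ?thesis
      using mem_ssum_J[of "diag_part r" M "rad_part r"] rad_part_mem_J diag_part_add_rad_part[of r] by auto
  next
    case False
    have d: "diag_part r \<in> S"
      using r by (rule diag_part_mem_S)
    with False covers have "\<forall>y\<in>J. y \<noteq> 0 \<longrightarrow> diag_part r \<cdot> y \<noteq> y \<cdot> diag_part r"
      unfolding centralizer_in_R by blast
    then have "commutator (diag_part r) ` J = J"
      using d S_subset_A commutator_image_eq_J_iff by blast
    then obtain y where y: "y \<in> J" "rad_part r = commutator (diag_part r) y"
      using rad_part_mem_J by (metis imageE)
    then have "r = diag_part r + commutator (diag_part r) y"
      using diag_part_add_rad_part[of r] by simp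
    then have "r \<in> conj_S y"
      unfolding conj_S_def using d by blast
    then show ?thesis
      using conj_S_mem_scompl[OF y(1)] by blast
  qed
  then have "A \<subseteq> \<Union> (scompl R J \<union> (\<lambda>M. ssum R M J) ` \<M>)"
    by blast
  moreover have "\<Union> (scompl R J \<union> (\<lambda>M. ssum R M J) ` \<M>) \<subseteq> A"
    using members nsubringD(1) by blast
  ultimately have "\<Union> (scompl R J \<union> (\<lambda>M. ssum R M J) ` \<M>) = carrier R"
    unfolding Aring_simps by (rule subset_antisym[rotated])
  then show ?thesis
    unfolding is_cover_def using members by (metis Aring_simps(1))
qed


subsection \<open>Lines of \<open>J\<close> and centralizers\<close>

definition scale :: "'a \<Rightarrow> (nat \<Rightarrow> nat \<Rightarrow> 'a) \<Rightarrow> nat \<Rightarrow> nat \<Rightarrow> 'a"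
  where "scale c v = (\<lambda>i j. c * v i j)"

lemma scale_mem_J: "v \<in> J \<Longrightarrow> scale c v \<in> J"
  by (rule J_memI) (simp add: scale_def J_entry_zero)

lemma scale_eq_0_iff: "scale c v = 0 \<longleftrightarrow> c = 0 \<or> v = 0"
  by (auto simp: scale_def fun_eq_iff)

lemma scale_scale: "scale c (scale d v) = scale (c * d) v"
  by (simp add: scale_def mult.assoc)

lemma scale_one: "scale 1 v = v"
  by (simp add: scale_def)

lemma scale_inj: "c \<noteq> 0 \<Longrightarrow> scale c v = scale c w \<longleftrightarrow> v = w"
  by (auto simp: scale_def fun_eq_iff)

lemma mmul_scale_left: "scale c v \<cdot> s = scale c (v \<cdot> s)"
  unfolding mat_mul_def scale_def by (simp add: sum_distrib_left distrib_left mult.assoc)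

lemma mmul_scale_right: "s \<cdot> scale c v = scale c (s \<cdot> v)"
  unfolding mat_mul_def scale_def by (simp add: sum_distrib_left distrib_left mult.left_commute)

lemma card_lines_J:
  "(card (UNIV :: 'a set) - 1) * card ((\<lambda>v. (\<lambda>c. scale c v) ` (UNIV - {0})) ` (J - {0})) = card J - 1"
proof -
  have "card (UNIV - {0 :: 'a}) * card ((\<lambda>v. (\<lambda>c. scale c v) ` (UNIV - {0})) ` (J - {0}))
      = card (J - {0})"
  proof (rule card_orbits_free_action[where mul = "(*)" and e = 1 and invert = inverse])
    show "inj_on (\<lambda>c. scale c v) (UNIV - {0})" if "v \<in> J - {0}" for v
    proof (rule inj_onI)
      fix c d assume "scale c v = scale d v"
      then have "scale (c - d) v = 0"
        by (simp add: scale_def fun_eq_iff left_diff_distrib)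
      then show "c = d"
        using that by (simp add: scale_eq_0_iff)
    qed
  qed (use finite_J in \<open>auto simp: scale_mem_J scale_eq_0_iff scale_scale scale_one\<close>)
  then show ?thesis
    using zero_mem_J finite_J by (simp add: card_Diff_singleton)
qed

lemma centralizer_scale:
  assumes "c \<noteq> 0"
  shows "centralizer_in R S (scale c v) = centralizer_in R S v"
proof -
  have "s \<cdot> scale c v = scale c v \<cdot> s \<longleftrightarrow> s \<cdot> v = v \<cdot> s" for s
    unfolding mmul_scale_left mmul_scale_right scale_inj[OF assms] ..
  then show ?thesis
    unfolding centralizer_in_R by simp
qed

lemma nsubring_centralizer: "nsubring R (centralizer_in R S v)"
  unfolding nsubring_R_iff centralizer_in_R
  using nsubringD[OF nsubring_S] S_subset_A
  by (auto simp: mat_mul_distribs mat_mul_assoc) (metis mat_mul_assoc)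

lemma centralizer_psubset:
  assumes "v \<in> J" "v \<noteq> 0"
  shows "centralizer_in R S v \<subset> S"
proof -
  have "corner \<notin> centralizer_in R S v"
    using J_mmul_corner[OF assms(1)] corner_mmul_J[OF assms(1)] assms(2) unfolding centralizer_in_R by auto
  then show ?thesis
    using corner_mem_S unfolding centralizer_in_R by auto
qed

text \<open>Centralizers are constant on the punctured lines \<open>F\<^sub>q\<^sup>* v\<close> of \<open>J\<close>, so one maximal subring of \<open>S\<close>
  per line suffices.\<close>
lemma exists_small_centralizer_cover:
  "\<exists>\<M>. (\<forall>M\<in>\<M>. maximal_subring_of R S M) \<and> (\<Union>x \<in> J - {0}. centralizer_in R S x) \<subseteq> \<Union>\<M>
     \<and> card \<M> * (card (UNIV :: 'a set) - 1) \<le> card J - 1"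
proof -
  let ?line = "\<lambda>v. (\<lambda>c. scale c v) ` (UNIV - {0 :: 'a})"
  have "\<exists>M. maximal_subring_of R S M \<and> centralizer_in R S v \<subseteq> M" if "v \<in> J - {0}" for v
    using that finite_subset[OF S_subset_A finite_A]
    by (intro exists_maximal_subring_of nsubring_centralizer centralizer_psubset) auto
  then obtain enlarge where enlarge: "\<And>v. v \<in> J - {0} \<Longrightarrow>
      maximal_subring_of R S (enlarge v) \<and> centralizer_in R S v \<subseteq> enlarge v"
    by metis
  define pick where "pick = (\<lambda>l. enlarge (SOME v. v \<in> l))"
  have pick: "maximal_subring_of R S (pick (?line v)) \<and> centralizer_in R S v \<subseteq> pick (?line v)"
    if v: "v \<in> J - {0}" for v
  proof -
    have "v \<in> ?line v"
      by (rule image_eqI[of _ _ 1]) (simp_all add: scale_def)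
    then have "(SOME w. w \<in> ?line v) \<in> ?line v"
      by (rule someI[where P = "\<lambda>w. w \<in> ?line v"])
    then obtain c where c: "c \<noteq> 0" "(SOME w. w \<in> ?line v) = scale c v"
      by blast
    then have "scale c v \<in> J - {0}"
      using v by (simp add: scale_mem_J scale_eq_0_iff)
    then show ?thesis
      using enlarge c centralizer_scale[OF c(1)] unfolding pick_def by metis
  qed
  show ?thesis
  proof (intro exI[of _ "pick ` ?line ` (J - {0})"] conjI)
    show "\<forall>M\<in>pick ` ?line ` (J - {0}). maximal_subring_of R S M"
      using pick by blast
    show "(\<Union>x \<in> J - {0}. centralizer_in R S x) \<subseteq> \<Union> (pick ` ?line ` (J - {0}))"
      using pick by blast
    have "card (pick ` ?line ` (J - {0})) \<le> card (?line ` (J - {0}))"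
      using finite_J by (intro card_image_le) simp
    then show "card (pick ` ?line ` (J - {0})) * (card (UNIV :: 'a set) - 1) \<le> card J - 1"
      using card_lines_J by (metis mult.commute mult_le_mono1)
  qed
qed


subsection \<open>Maximal subrings of \<open>R\<close>\<close>

definition col_unit :: "nat \<Rightarrow> 'a \<Rightarrow> nat \<Rightarrow> nat \<Rightarrow> 'a"
  where "col_unit i c = (\<lambda>k l. if k = i \<and> l = n then c else 0)"

lemma J_eq_sum_col_unit:
  assumes "x \<in> J"
  shows "x = (\<Sum>i<n. col_unit i (x i n))"
proof (intro ext)
  fix k l
  have "(\<Sum>i<n. col_unit i (x i n)) k l = (\<Sum>i<n. if i = k then (if l = n then x k n else 0) else 0)"
    unfolding sum_mat_apply col_unit_def by (intro sum.cong) auto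
  also have "\<dots> = x k l"
    using J_entry_zero[OF assms, of k l] by (auto simp: sum.delta)
  finally show "x k l = (\<Sum>i<n. col_unit i (x i n)) k l" ..
qed

lemma col_unit_eq_S_sandwich:
  assumes "i < n" "j < n" "a \<in> K1" "b \<in> K2" "d \<in> J"
  shows "(\<lambda>k l. if k = i \<and> l = j then a else 0) \<in> S" "(\<lambda>k l. if k = n \<and> l = n then b else 0) \<in> S"
    and "(\<lambda>k l. if k = i \<and> l = j then a else 0) \<cdot> d \<cdot> (\<lambda>k l. if k = n \<and> l = n then b else 0)
      = col_unit i (a * d j n * b)"
proof -
  show "(\<lambda>k l. if k = i \<and> l = j then a else 0) \<in> S" "(\<lambda>k l. if k = n \<and> l = n then b else 0) \<in> S"
    unfolding Sdiag_def Amat_def using assms subfieldD[OF K1] subfieldD[OF K2] by auto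
  have "((\<lambda>k l. if k = i \<and> l = j then a else 0) \<cdot> d) k l = (if k = i then a * d j l else 0)" for k l
  proof -
    have "((\<lambda>k l. if k = i \<and> l = j then a else 0) \<cdot> d) k l
        = (\<Sum>m<Suc n. if m = j then (if k = i then a * d j l else 0) else 0)"
      unfolding mat_mul_def by (intro sum.cong) auto
    then show ?thesis
      using assms(2) by (simp add: sum.delta)
  qed
  moreover have "(\<Sum>m<Suc n. (if k = i then a * d j m else 0) * (if m = n \<and> l = n then b else 0))
      = col_unit i (a * d j n * b) k l" for k l
  proof -
    have "(\<Sum>m<Suc n. (if k = i then a * d j m else 0) * (if m = n \<and> l = n then b else 0))
        = (\<Sum>m<Suc n. if m = n then (if k = i \<and> l = n then a * d j n * b else 0) else 0)"
      by (intro sum.cong) auto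
    then show ?thesis
      by (simp add: sum.delta col_unit_def)
  qed
  ultimately show "(\<lambda>k l. if k = i \<and> l = j then a else 0) \<cdot> d \<cdot> (\<lambda>k l. if k = n \<and> l = n then b else 0)
      = col_unit i (a * d j n * b)"
    by (simp add: mat_mul_def fun_eq_iff)
qed

text \<open>Once \<open>K1\<close> and \<open>K2\<close> generate the whole field, \<open>J\<close> is a simple \<open>S\<close>-bimodule: the products
  \<open>E\<^sub>i\<^sub>j(a) d E\<^sub>n\<^sub>n(b)\<close> place every \<open>a d\<^sub>j\<^sub>n b\<close> in any row \<open>i\<close>, and sums of products \<open>a b\<close> exhaust the field.\<close>
lemma S_bimodule_in_J_eq_J:
  assumes full: "compositum K1 K2 = UNIV"
    and I: "I \<subseteq> J" "0 \<in> I" "\<And>x y. x \<in> I \<Longrightarrow> y \<in> I \<Longrightarrow> x + y \<in> I"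
      "\<And>s x. s \<in> S \<Longrightarrow> x \<in> I \<Longrightarrow> s \<cdot> x \<in> I" "\<And>s x. s \<in> S \<Longrightarrow> x \<in> I \<Longrightarrow> x \<cdot> s \<in> I"
    and d: "d \<in> I" "d \<noteq> 0"
  shows "I = J"
proof
  have "d \<in> J"
    using d I(1) by blast
  then obtain j where j: "j < n" "d j n \<noteq> 0"
    using d(2) J_entry_zero by (metis ext zero_fun_apply)
  have prod: "col_unit i (a * d j n * b) \<in> I" if "i < n" "a \<in> K1" "b \<in> K2" for i a b
    using col_unit_eq_S_sandwich[OF that(1) j(1) that(2,3) \<open>d \<in> J\<close>] I(4,5) d(1) by metis
  have "col_unit i (c * d j n) \<in> I" if "i < n" "c \<in> compositum K1 K2" for i c
    using that(2)
  proof (induction c rule: compositum.induct)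
    case zero
    then show ?case
      using I(2) by (simp add: col_unit_def zero_fun_def)
  next
    case (add_prod a b l)
    have "col_unit i ((a * b + l) * d j n) = col_unit i (a * d j n * b) + col_unit i (l * d j n)"
      by (simp add: col_unit_def fun_eq_iff algebra_simps)
    then show ?case
      using I(3)[OF prod[OF that(1) add_prod(1,2)] add_prod(4)] by (simp only:)
  qed
  then have unit: "col_unit i w \<in> I" if "i < n" for i w
    using that full j(2) by (metis UNIV_I divide_inverse_commute field_class.field_inverse mult.assoc mult.right_neutral)
  show "J \<subseteq> I"
  proof
    fix x assume "x \<in> J"
    have "(\<Sum>i\<in>F. col_unit i (x i n)) \<in> I" if "F \<subseteq> {..<n}" for F
      using finite_subset[OF that] that
      by (induction F rule: finite_induct) (auto simp: I(2,3) unit)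
    then show "x \<in> I"
      using J_eq_sum_col_unit[OF \<open>x \<in> J\<close>] by (metis order_refl)
  qed
qed (rule I(1))

lemma maximal_subring_of_R_not_containing_J:
  assumes full: "compositum K1 K2 = UNIV"
    and H: "maximal_subring_of R A H" and not_J: "\<not> J \<subseteq> H"
  shows "H \<in> scompl R J"
proof -
  have H_subring: "nsubring R H" and "H \<noteq> A"
    using H unfolding maximal_subring_of_def by auto
  have "H \<subseteq> ssum R H J"
    using mem_ssum_J[of _ H 0] zero_mem_J by auto
  moreover have "J \<subseteq> ssum R H J"
    using mem_ssum_J[of 0 H] nsubringD(2)[OF H_subring] by force
  ultimately have sum_full: "ssum R H J = A"
    using H not_J nsubring_ssum_J[OF H_subring] nsubringD(1)
    unfolding maximal_subring_of_def by blast
  have "H \<inter> J = {0}"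
  proof (rule ccontr)
    assume "H \<inter> J \<noteq> {0}"
    then obtain d where d: "d \<in> H \<inter> J" "d \<noteq> 0"
      using nsubringD(2)[OF H_subring] zero_mem_J by blast
    have split: "\<exists>h y. h \<in> H \<and> y \<in> J \<and> s = h + y" if "s \<in> S" for s
      using that S_subset_A sum_full unfolding ssum_R by blast
    have "H \<inter> J = J"
    proof (rule S_bimodule_in_J_eq_J[OF full _ _ _ _ _ d])
      show "s \<cdot> x \<in> H \<inter> J" if s: "s \<in> S" and x: "x \<in> H \<inter> J" for s x
      proof -
        obtain h y where hy: "h \<in> H" "y \<in> J" "s = h + y"
          using split[OF s] by blast
        then have "s \<cdot> x = h \<cdot> x"
          using x J_mmul_J by (simp add: mat_mul_distribs)
        then show ?thesis
          using s x hy(1) nsubringD(1,5)[OF H_subring] A_mmul_J by auto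
      qed
      show "x \<cdot> s \<in> H \<inter> J" if s: "s \<in> S" and x: "x \<in> H \<inter> J" for s x
      proof -
        obtain h y where hy: "h \<in> H" "y \<in> J" "s = h + y"
          using split[OF s] by blast
        then have "x \<cdot> s = x \<cdot> h"
          using x J_mmul_J by (simp add: mat_mul_distribs)
        then show ?thesis
          using s x hy(1) nsubringD(1,5)[OF H_subring] J_mmul_A by auto
      qed
    qed (use nsubringD[OF H_subring] zero_mem_J add_mem_J in auto)
    then show False
      using not_J by blast
  qed
  then show ?thesis
    unfolding scompl_def using H_subring sum_full by simp
qed

lemma maximal_subring_of_R_containing_J:
  assumes H: "maximal_subring_of R A H" and J: "J \<subseteq> H"
  shows "maximal_subring_of R S (H \<inter> S)"
proof -
  have H_subring: "nsubring R H" and "H \<noteq> A"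
    and H_max: "\<And>H'. nsubring R H' \<Longrightarrow> H \<subseteq> H' \<Longrightarrow> H' \<subset> A \<Longrightarrow> H' = H"
    using H unfolding maximal_subring_of_def by auto
  have diag_part_mem: "diag_part h \<in> H \<inter> S" if "h \<in> H" for h
  proof -
    have "diag_part h = h - rad_part h"
      using diag_part_add_rad_part[of h] by (simp add: algebra_simps)
    then have "diag_part h \<in> H"
      using that J rad_part_mem_J nsubring_diff[OF H_subring] by auto
    then show ?thesis
      using that nsubringD(1)[OF H_subring] diag_part_mem_S by auto
  qed
  have "nsubring R (H \<inter> S)"
    using H_subring nsubring_S unfolding nsubring_R_iff by auto
  moreover have "\<not> S \<subseteq> H"
  proof
    assume "S \<subseteq> H"
    then have "r \<in> H" if "r \<in> A" for r
      using that J diag_part_mem_S rad_part_mem_J nsubringD(4)[OF H_subring] diag_part_add_rad_part[of r]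
      by (metis subsetD)
    then show False
      using \<open>H \<noteq> A\<close> nsubringD(1)[OF H_subring] by blast
  qed
  moreover have "M' = H \<inter> S" if M': "nsubring R M'" "H \<inter> S \<subseteq> M'" "M' \<subset> S" for M'
  proof -
    have "h \<in> ssum R M' J" if "h \<in> H" for h
      using mem_ssum_J[of "diag_part h" M' "rad_part h"] diag_part_mem[OF that] M'(2) rad_part_mem_J
        diag_part_add_rad_part[of h] by auto
    then have "ssum R M' J = H"
      using H_max[OF nsubring_ssum_J[OF M'(1)]] ssum_J_proper[OF M'(3)] nsubringD(1)[OF nsubring_ssum_J[OF M'(1)]]
      by blast
    then have "M' \<subseteq> H"
      using mem_ssum_J[of _ M' 0] zero_mem_J by fastforce
    then show ?thesis
      using M' by blast
  qed
  ultimately show ?thesis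
    unfolding maximal_subring_of_def by blast
qed


subsection \<open>Bounds on \<open>\<sigma>(R)\<close>\<close>

lemma ideal_J: "ideal J R"
proof (rule idealI[OF ring_R])
  show "subgroup J (add_monoid R)"
  proof
    show "J \<subseteq> carrier (add_monoid R)" "\<one>\<^bsub>add_monoid R\<^esub> \<in> J"
      using J_subset_A zero_mem_J by simp_all
    show "x \<otimes>\<^bsub>add_monoid R\<^esub> y \<in> J" if "x \<in> J" "y \<in> J" for x y
      using that add_mem_J by simp
    show "inv\<^bsub>add_monoid R\<^esub> x \<in> J" if "x \<in> J" for x
      using that uminus_mem_J a_inv_R J_subset_A by (metis a_inv_def subsetD)
  qed
qed (simp_all add: A_mmul_J J_mmul_A)

lemma finite_cover: "is_cover R C \<Longrightarrow> finite C"
  unfolding is_cover_def by (rule finite_subset[of _ "Pow A"]) (use finite_A nsubringD(1) in auto)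

lemma is_coverD:
  assumes "is_cover R C"
  shows "H \<in> C \<Longrightarrow> nsubring R H" "r \<in> A \<Longrightarrow> \<exists>H\<in>C. r \<in> H" "\<Union>C \<subseteq> A"
  using assms nsubringD(1) unfolding is_cover_def by auto

lemma exists_S_outside_members_containing_J:
  assumes "1 \<le> n" "sigma_elementary R" "minimal_cover R C"
  shows "\<exists>s\<in>S. \<forall>H\<in>C. J \<subseteq> H \<longrightarrow> s \<notin> H"
proof -
  have cover: "is_cover R C"
    using assms(3) unfolding minimal_cover_def by blast
  have "J \<noteq> {\<zero>\<^bsub>R\<^esub>}"
    using J_nonzero[OF assms(1)] by auto
  then have "\<Union> {H \<in> C. J \<subseteq> H} \<noteq> carrier R"
    by (rule minimal_cover_members_above_ideal[OF assms(2) ideal_J _ assms(3)])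
  moreover have "\<Union> {H \<in> C. J \<subseteq> H} \<subseteq> A"
    using is_coverD(3)[OF cover] by blast
  ultimately have "\<exists>r\<in>A. r \<notin> \<Union> {H \<in> C. J \<subseteq> H}"
    by auto
  then obtain r where r: "r \<in> A" "\<And>H. H \<in> C \<Longrightarrow> J \<subseteq> H \<Longrightarrow> r \<notin> H"
    by blast
  have "diag_part r \<notin> H" if "H \<in> C" "J \<subseteq> H" for H
  proof
    assume "diag_part r \<in> H"
    then have "diag_part r + rad_part r \<in> H"
      using that rad_part_mem_J nsubringD(4)[OF is_coverD(1)[OF cover that(1)]] by blast
    then show False
      using r(2)[OF that] diag_part_add_rad_part[of r] by simp
  qed
  then show ?thesis
    using diag_part_mem_S[OF r(1)] by blast
qed

lemma card_J_le_members_not_containing_J: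
  assumes full: "compositum K1 K2 = UNIV"
    and C: "is_cover R C" "\<forall>H\<in>C. maximal_subring_of R A H"
    and s: "s \<in> S" "\<forall>H\<in>C. J \<subseteq> H \<longrightarrow> s \<notin> H"
  shows "card J \<le> card {H \<in> C. \<not> J \<subseteq> H}"
proof -
  have "\<exists>H\<in>C. s + x \<in> H" if "x \<in> J" for x
    using that s(1) S_subset_A J_subset_A add_mem_A by (intro is_coverD(2)[OF C(1)]) auto
  then obtain g where g: "\<And>x. x \<in> J \<Longrightarrow> g x \<in> C" "\<And>x. x \<in> J \<Longrightarrow> s + x \<in> g x"
    by metis
  have subring: "nsubring R (g x)" if "x \<in> J" for x
    using is_coverD(1)[OF C(1) g(1)[OF that]] .
  have g_not_J: "\<not> J \<subseteq> g x" if x: "x \<in> J" for x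
  proof
    assume "J \<subseteq> g x"
    then have "(s + x) - x \<in> g x"
      using x g(2)[OF x] nsubring_diff[OF subring[OF x]] by blast
    then show False
      using s(2) g(1)[OF x] \<open>J \<subseteq> g x\<close> by simp
  qed
  have "inj_on g J"
  proof (rule inj_onI)
    fix x y assume x: "x \<in> J" and y: "y \<in> J" and "g x = g y"
    then have "(s + x) - (s + y) \<in> g x"
      using nsubring_diff[OF subring[OF x] g(2)[OF x], of "s + y"] g(2)[OF y] by simp
    moreover have "g x \<in> scompl R J"
      using maximal_subring_of_R_not_containing_J[OF full _ g_not_J[OF x]] C(2) g(1)[OF x] by blast
    ultimately have "x - y \<in> g x \<inter> J"
      using diff_mem_J[OF x y] by simp
    moreover have "g x \<inter> J = {0}"
      using \<open>g x \<in> scompl R J\<close> unfolding scompl_def by simp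
    ultimately have "x - y = 0"
      by blast
    then show "x = y"
      by simp
  qed
  moreover have "g ` J \<subseteq> {H \<in> C. \<not> J \<subseteq> H}"
    using g(1) g_not_J by blast
  ultimately show ?thesis
    using finite_cover[OF C(1)] by (intro card_inj_on_le) auto
qed

lemma card_centralizer_cover_le_members_containing_J:
  assumes full: "compositum K1 K2 = UNIV"
    and \<M>_min: "\<And>\<M>'. (\<forall>M\<in>\<M>'. maximal_subring_of R S M) \<and> (\<Union>x \<in> J - {0}. centralizer_in R S x) \<subseteq> \<Union>\<M>'
      \<Longrightarrow> card \<M> \<le> card \<M>'"
    and C: "is_cover R C" "\<forall>H\<in>C. maximal_subring_of R A H"
  shows "card \<M> \<le> card {H \<in> C. J \<subseteq> H}"
proof -
  let ?C\<^sub>J = "{H \<in> C. J \<subseteq> H}"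
  have "s \<in> \<Union> ((\<lambda>H. H \<inter> S) ` ?C\<^sub>J)" if "s \<in> centralizer_in R S v" "v \<in> J - {0}" for s v
  proof -
    have s: "s \<in> S" "s \<cdot> v = v \<cdot> s"
      using that(1) unfolding centralizer_in_R by auto
    then have "commutator s ` J \<noteq> J"
      using that(2) S_subset_A commutator_image_eq_J_iff by blast
    moreover have "commutator s ` J \<subseteq> J"
      using s(1) S_subset_A commutator_mem_J by blast
    ultimately obtain y where y: "y \<in> J" "y \<notin> commutator s ` J"
      by blast
    then obtain H where H: "H \<in> C" "s + y \<in> H"
      using s(1) S_subset_A J_subset_A add_mem_A is_coverD(2)[OF C(1)] by blast
    have "J \<subseteq> H"
    proof (rule ccontr)
      assume "\<not> J \<subseteq> H"
      then have "H \<in> conj_S ` J"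
        using maximal_subring_of_R_not_containing_J[OF full] C(2) H(1) scompl_eq_conj_S by blast
      then show False
        using commutator_eq_of_mem_conj_S[OF _ s(1) y(1)] H(2) y(2) by blast
    qed
    then have "(s + y) - y \<in> H"
      using H y(1) nsubring_diff[OF is_coverD(1)[OF C(1) H(1)]] by blast
    then show ?thesis
      using H(1) \<open>J \<subseteq> H\<close> s(1) by auto
  qed
  moreover have "\<forall>M\<in>(\<lambda>H. H \<inter> S) ` ?C\<^sub>J. maximal_subring_of R S M"
    using C(2) maximal_subring_of_R_containing_J by blast
  ultimately have "card \<M> \<le> card ((\<lambda>H. H \<inter> S) ` ?C\<^sub>J)"
    by (intro \<M>_min) blast
  also have "\<dots> \<le> card ?C\<^sub>J"
    using finite_cover[OF C(1)] by (intro card_image_le) simp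
  finally show ?thesis .
qed

lemma sigma_lower_bound:
  assumes "1 \<le> n" and full: "compositum K1 K2 = UNIV" and "sigma_elementary R"
    and \<M>_min: "\<And>\<M>'. (\<forall>M\<in>\<M>'. maximal_subring_of R S M) \<and> (\<Union>x \<in> J - {0}. centralizer_in R S x) \<subseteq> \<Union>\<M>'
      \<Longrightarrow> card \<M> \<le> card \<M>'"
  shows "enat (card J + card \<M>) \<le> sigma R"
proof -
  obtain \<M>\<^sub>0 where "\<forall>M\<in>\<M>\<^sub>0. maximal_subring_of R S M" "(\<Union>x \<in> J - {0}. centralizer_in R S x) \<subseteq> \<Union>\<M>\<^sub>0"
    using exists_small_centralizer_cover by blast
  then have "is_cover R (scompl R J \<union> (\<lambda>M. ssum R M J) ` \<M>\<^sub>0)"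
    by (rule is_cover_scompl_ssum[OF assms(1)])
  then obtain C where C: "minimal_cover R C" "\<forall>H\<in>C. maximal_subring_of R A H"
    using exists_minimal_cover_by_maximal_subrings finite_A by (metis Aring_simps(1))
  then have cover: "is_cover R C"
    unfolding minimal_cover_def by blast
  obtain s where "s \<in> S" "\<forall>H\<in>C. J \<subseteq> H \<longrightarrow> s \<notin> H"
    using exists_S_outside_members_containing_J[OF assms(1,3) C(1)] by blast
  then have "card J \<le> card {H \<in> C. \<not> J \<subseteq> H}"
    by (intro card_J_le_members_not_containing_J[OF full cover C(2)])
  moreover have "card \<M> \<le> card {H \<in> C. J \<subseteq> H}"
    by (rule card_centralizer_cover_le_members_containing_J[OF full \<M>_min cover C(2)])
  moreover have "card {H \<in> C. \<not> J \<subseteq> H} + card {H \<in> C. J \<subseteq> H} = card C"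
    using finite_cover[OF cover] by (subst card_Un_disjoint[symmetric]) (auto intro: arg_cong[where f = card])
  ultimately have "enat (card J + card \<M>) \<le> enat (card C)"
    by simp
  also have "\<dots> = sigma R"
    using C(1) finite_cover[OF cover] unfolding minimal_cover_def ecard_def by simp
  finally show ?thesis .
qed


lemma card_J: "card J = card (UNIV :: 'a set) ^ n"
proof -
  let ?P = "PiE {..<n} (\<lambda>_. UNIV :: 'a set)"
  let ?col = "\<lambda>v. (\<lambda>i j. if i < n \<and> j = n then v i else 0) :: nat \<Rightarrow> nat \<Rightarrow> 'a"
  have "inj_on ?col ?P"
  proof (rule inj_onI)
    fix v w assume v: "v \<in> ?P" and w: "w \<in> ?P" and eq: "?col v = ?col w"
    have "v i = w i" if "i \<in> {..<n}" for i
      using fun_cong[OF fun_cong[OF eq], of i n] that by simp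
    then show "v = w"
      by (rule PiE_ext[OF v w])
  qed
  moreover have "?col ` ?P = J"
  proof
    have "?col v \<in> J" for v
      by (rule J_memI) auto
    then show "?col ` ?P \<subseteq> J"
      by blast
    show "J \<subseteq> ?col ` ?P"
    proof
      fix x assume x: "x \<in> J"
      have "x = ?col (restrict (\<lambda>i. x i n) {..<n})"
        using J_entry_zero[OF x] by (auto simp: fun_eq_iff)
      moreover have "restrict (\<lambda>i. x i n) {..<n} \<in> ?P"
        by simp
      ultimately show "x \<in> ?col ` ?P"
        by blast
    qed
  qed
  ultimately have "card J = card ?P"
    using card_image by fastforce
  then show ?thesis
    by (simp add: card_PiE)
qed

lemma finite_maximal_subrings_of_S: "\<forall>M\<in>\<M>. maximal_subring_of R S M \<Longrightarrow> finite \<M>"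
  by (rule finite_subset[of _ "Pow S"])
    (use finite_subset[OF S_subset_A finite_A] in \<open>auto simp: maximal_subring_of_def\<close>)

lemma card_scompl_ssum_le:
  assumes "\<forall>M\<in>\<M>. maximal_subring_of R S M"
  shows "card (scompl R J \<union> (\<lambda>M. ssum R M J) ` \<M>) \<le> card J + card \<M>"
proof -
  have "card (scompl R J \<union> (\<lambda>M. ssum R M J) ` \<M>) \<le> card (scompl R J) + card ((\<lambda>M. ssum R M J) ` \<M>)"
    by (rule card_Un_le)
  also have "\<dots> \<le> card J + card \<M>"
    using card_scompl_le card_image_le[OF finite_maximal_subrings_of_S[OF assms]] by (rule add_mono)
  finally show ?thesis .
qed

lemma card_minimal_centralizer_cover:
  assumes "\<And>\<M>'. (\<forall>M\<in>\<M>'. maximal_subring_of R S M) \<and> (\<Union>x \<in> J - {0}. centralizer_in R S x) \<subseteq> \<Union>\<M>'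
      \<Longrightarrow> card \<M> \<le> card \<M>'"
  shows "card \<M> * (card (UNIV :: 'a set) - 1) \<le> card J - 1"
proof -
  obtain \<M>\<^sub>0 where "(\<forall>M\<in>\<M>\<^sub>0. maximal_subring_of R S M) \<and> (\<Union>x \<in> J - {0}. centralizer_in R S x) \<subseteq> \<Union>\<M>\<^sub>0"
    and "card \<M>\<^sub>0 * (card (UNIV :: 'a set) - 1) \<le> card J - 1"
    using exists_small_centralizer_cover by blast
  then show ?thesis
    using assms by (meson le_trans mult_le_mono1)
qed

lemma centralizer_cover_nonempty:
  assumes "1 \<le> n" "(\<Union>x \<in> J - {0}. centralizer_in R S x) \<subseteq> \<Union>\<M>"
  shows "\<M> \<noteq> {}"
proof -
  obtain v where "v \<in> J" "v \<noteq> 0"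
    using J_nonzero[OF assms(1)] by blast
  moreover have "0 \<in> centralizer_in R S v"
    using nsubring_centralizer nsubringD(2) by blast
  ultimately show ?thesis
    using assms(2) by blast
qed

lemma minimal_cover_scompl_ssum:
  assumes "1 \<le> n" "compositum K1 K2 = UNIV" "sigma_elementary R"
    and "\<forall>M\<in>\<M>. maximal_subring_of R S M" "(\<Union>x \<in> J - {0}. centralizer_in R S x) \<subseteq> \<Union>\<M>"
    and "\<And>\<M>'. (\<forall>M\<in>\<M>'. maximal_subring_of R S M) \<and> (\<Union>x \<in> J - {0}. centralizer_in R S x) \<subseteq> \<Union>\<M>'
      \<Longrightarrow> card \<M> \<le> card \<M>'"
  shows "minimal_cover R (scompl R J \<union> (\<lambda>M. ssum R M J) ` \<M>)"
proof -
  let ?C = "scompl R J \<union> (\<lambda>M. ssum R M J) ` \<M>"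
  have cover: "is_cover R ?C"
    using is_cover_scompl_ssum assms(1,4,5) by blast
  have "ecard ?C = enat (card ?C)"
    using finite_cover[OF cover] by (simp add: ecard_def)
  also have "\<dots> \<le> enat (card J + card \<M>)"
    using card_scompl_ssum_le[OF assms(4)] by simp
  also have "\<dots> \<le> sigma R"
    using sigma_lower_bound assms(1-3,6) by blast
  finally show ?thesis
    using sigma_le_ecard[OF cover] cover unfolding minimal_cover_def by simp
qed

lemma card_ssum_image_bound:
  assumes "\<forall>M\<in>\<M>. maximal_subring_of R S M"
    and "\<And>\<M>'. (\<forall>M\<in>\<M>'. maximal_subring_of R S M) \<and> (\<Union>x \<in> J - {0}. centralizer_in R S x) \<subseteq> \<Union>\<M>'
      \<Longrightarrow> card \<M> \<le> card \<M>'"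
  shows "real (card ((\<lambda>M. ssum R M J) ` \<M>)) \<le> (real (card J) - 1) / (real (card (UNIV :: 'a set)) - 1)"
proof -
  have "card ((\<lambda>M. ssum R M J) ` \<M>) * (card (UNIV :: 'a set) - 1) \<le> card J - 1"
    using card_image_le[OF finite_maximal_subrings_of_S[OF assms(1)]] card_minimal_centralizer_cover[OF assms(2)]
    by (meson le_trans mult_le_mono1)
  then show ?thesis
    using real_le_divide_of_mult_le[OF card_UNIV_field_ge_2] card_J by simp
qed

lemma sigma_bounds:
  assumes "1 \<le> n" "compositum K1 K2 = UNIV" "sigma_elementary R"
    and "\<forall>M\<in>\<M>. maximal_subring_of R S M" "(\<Union>x \<in> J - {0}. centralizer_in R S x) \<subseteq> \<Union>\<M>"
    and "\<And>\<M>'. (\<forall>M\<in>\<M>'. maximal_subring_of R S M) \<and> (\<Union>x \<in> J - {0}. centralizer_in R S x) \<subseteq> \<Union>\<M>'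
      \<Longrightarrow> card \<M> \<le> card \<M>'"
  defines "q \<equiv> card (UNIV :: 'a set)"
  shows "enat (q ^ n + 1) \<le> sigma R" "sigma R \<le> enat ((q ^ (n + 1) - 1) div (q - 1))"
proof -
  have "\<M> \<noteq> {}"
    by (rule centralizer_cover_nonempty[OF assms(1,5)])
  then have "q ^ n + 1 \<le> card J + card \<M>"
    using finite_maximal_subrings_of_S[OF assms(4)] card_J unfolding q_def by (simp add: Suc_le_eq card_gt_0_iff)
  also have "enat (card J + card \<M>) \<le> sigma R"
    using sigma_lower_bound assms(1-3,6) by blast
  finally show "enat (q ^ n + 1) \<le> sigma R"
    by (meson enat_ord_simps(1) order_trans)
  have cover: "is_cover R (scompl R J \<union> (\<lambda>M. ssum R M J) ` \<M>)"
    using is_cover_scompl_ssum assms(1,4,5) by blast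
  have "sigma R \<le> enat (card (scompl R J \<union> (\<lambda>M. ssum R M J) ` \<M>))"
    using sigma_le_ecard[OF cover] finite_cover[OF cover] by (simp add: ecard_def)
  also have "\<dots> \<le> enat (q ^ n + card \<M>)"
    using card_scompl_ssum_le[OF assms(4)] card_J unfolding q_def by simp
  also have "q ^ n + card \<M> \<le> (q ^ (n + 1) - 1) div (q - 1)"
    using geometric_sum_bound card_UNIV_field_ge_2 card_minimal_centralizer_cover[OF assms(6)] card_J
    unfolding q_def by simp
  finally show "sigma R \<le> enat ((q ^ (n + 1) - 1) div (q - 1))"
    by simp
qed

end

theorem proposition3p3:
  fixes p d1 d2 q1 q2 n :: nat
    and K1 K2 :: "'a::{field,finite} set"
    and \<M> :: "(nat \<Rightarrow> nat \<Rightarrow> 'a) set set"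
  defines "q \<equiv> p ^ lcm d1 d2"
  defines "R \<equiv> Aring n K1 K2"
  defines "S \<equiv> Sdiag n K1 K2"
  defines "J \<equiv> Jrad n :: (nat \<Rightarrow> nat \<Rightarrow> 'a) set"
  defines "U \<equiv> (\<Union>x \<in> J - {\<zero>\<^bsub>R\<^esub>}. centralizer_in R S x)"
  defines "\<Z> \<equiv> (\<lambda>M. ssum R M J) ` \<M>"
  assumes "n \<ge> 1" and "prime p" and "d1 \<ge> 1" and "d2 \<ge> 1"
    and "q1 = p ^ d1" and "q2 = p ^ d2"
    and "card (UNIV :: 'a set) = q"
    and "is_subfield K1" and "card K1 = q1"
    and "is_subfield K2" and "card K2 = q2"
    and "(\<forall>M\<in>\<M>. maximal_subring_of R S M) \<and> U \<subseteq> \<Union>\<M>"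
    and "\<And>\<M>'. (\<forall>M\<in>\<M>'. maximal_subring_of R S M) \<and> U \<subseteq> \<Union>\<M>' \<Longrightarrow> card \<M> \<le> card \<M>'"
  shows "is_cover R (scompl R J \<union> \<Z>)
    \<and> (sigma_elementary R \<longrightarrow> minimal_cover R (scompl R J \<union> \<Z>))
    \<and> real (card \<Z>) \<le> (real (card J) - 1) / (real q - 1)
    \<and> (real (card J) - 1) / (real q - 1) = (real q ^ n - 1) / (real q - 1)
    \<and> (sigma_elementary R \<longrightarrow>
         enat (q ^ n + 1) \<le> sigma R \<and> sigma R \<le> enat ((q ^ (n + 1) - 1) div (q - 1)))"
proof -
  interpret AR: A_ring n K1 K2
    using \<open>is_subfield K1\<close> \<open>is_subfield K2\<close> by unfold_locales
  have \<M>: "\<forall>M\<in>\<M>. maximal_subring_of AR.R AR.S M" "(\<Union>x \<in> AR.J - {0}. centralizer_in AR.R AR.S x) \<subseteq> \<Union>\<M>"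
    "\<And>\<M>'. (\<forall>M\<in>\<M>'. maximal_subring_of AR.R AR.S M) \<and> (\<Union>x \<in> AR.J - {0}. centralizer_in AR.R AR.S x) \<subseteq> \<Union>\<M>'
      \<Longrightarrow> card \<M> \<le> card \<M>'"
    using assms(18,19) by (simp_all add: U_def R_def S_def J_def)
  have full: "compositum K1 K2 = UNIV"
    using compositum_eq_UNIV[OF \<open>is_subfield K1\<close> \<open>is_subfield K2\<close> \<open>prime p\<close> \<open>d1 \<ge> 1\<close> \<open>d2 \<ge> 1\<close>]
      assms(11-13,15,17) unfolding q_def by simp
  have card_J: "card AR.J = q ^ n"
    using AR.card_J \<open>card (UNIV :: 'a set) = q\<close> by simp
  show ?thesis
    unfolding \<Z>_def R_def J_def
  proof (intro conjI impI)
    show "is_cover AR.R (scompl AR.R AR.J \<union> (\<lambda>M. ssum AR.R M AR.J) ` \<M>)"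
      by (rule AR.is_cover_scompl_ssum[OF \<open>n \<ge> 1\<close> \<M>(1,2)])
    show "minimal_cover AR.R (scompl AR.R AR.J \<union> (\<lambda>M. ssum AR.R M AR.J) ` \<M>)" if "sigma_elementary AR.R"
      by (rule AR.minimal_cover_scompl_ssum[OF \<open>n \<ge> 1\<close> full that \<M>])
    show "real (card ((\<lambda>M. ssum AR.R M AR.J) ` \<M>)) \<le> (real (card AR.J) - 1) / (real q - 1)"
      using AR.card_ssum_image_bound[OF \<M>(1,3)] \<open>card (UNIV :: 'a set) = q\<close> by simp
    show "(real (card AR.J) - 1) / (real q - 1) = (real q ^ n - 1) / (real q - 1)"
      using card_J by simp
    show "enat (q ^ n + 1) \<le> sigma AR.R" "sigma AR.R \<le> enat ((q ^ (n + 1) - 1) div (q - 1))"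
      if "sigma_elementary AR.R"
      using AR.sigma_bounds[OF \<open>n \<ge> 1\<close> full that \<M>] \<open>card (UNIV :: 'a set) = q\<close> by simp_all
  qed
qed

end
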